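(* In the setting described in the context, suppose $p_i,p_j,p_k,p_l,p_u,p_w\in S_1$ satisfy $d(p_i,p_k)\ne d(p_j,p_l)$, $d(p_i,p_u)\ne d(p_j,p_w)$ and $d(p_k,p_u)\ne d(p_l,p_w)$. Then $|C_{ij}\cap C_{kl}\cap C_{uw}|\le2d$, unless $C_2$ is a conic or a line.
   Context: A plane algebraic curve is an infinite set $Z_{\mathbb{R}}(f)=\{(a,b)\in\mathbb{R}^2:f(a,b)=0\}$ for a nonzero $f\in\mathbb{R}[x,y]$; its degree is the minimal degree of such $f$; it is irreducible if $f$ can be chosen irreducible over $\mathbb{R}$. A conic is a curve of degree 2 that is not a union of two lines. Setting: $d\ge1$; $C_1=Z_{\mathbb{R}}(f_1)$ and $C_2=Z_{\mathbb{R}}(f_2)$ are irreducible plane algebraic curves of degree at most $d$ (possibly equal), with $f_1,f_2$ of minimum degree. $S_1=\{p_1,\dots,p_m\}\subset C_1$ and $S_2=\{q_1,\dots,q_n\}\subset C_2$ are sets of distinct points, $p_i=(a_i,b_i)$, satisfying: (1) neither $C_1$ nor $C_2$ is a vertical line; (2) $S_1\cap S_2=\emptyset$; (3) if $C_1$ (resp. $C_2$) is a circle, its center is not in $S_2$ (resp. $S_1$); (4) if $C_1$ (resp. $C_2$) is a circle, every concentric circle contains at most one point of $S_2$ (resp. $S_1$); (5) if $C_1$ (resp. $C_2$) is a line, then for every line $\ell$ parallel to it, the union of $\ell$ and its reflection in $C_1$ (resp. $C_2$) contains at most one point of $S_2$ (resp. $S_1$); (6) if $C_1$ (resp. $C_2$)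 is a line, every orthogonal line contains at most one point of $S_2$ (resp. $S_1$). For $1\le i,j\le m$, $C_{ij}\subset\mathbb{R}^4$ is the set of $(x,y,x',y')$ with $f_2(x,y)=0$, $f_2(x',y')=0$ and $(x-a_i)^2+(y-b_i)^2=(x'-a_j)^2+(y'-b_j)^2$. $d(\cdot,\cdot)$ is Euclidean distance. *)

theory Defs
  imports "HOL-Analysis.Analysis" "HOL-Computational_Algebra.Polynomial_Factorial"
begin

text \<open>Bivariate real polynomials are encoded as elements of real poly poly:
  f = sum_i (coeff f i)(x) * y^i, with coefficients polynomials in x.\<close>

type_synonym bipoly = "real poly poly"

definition eval2 :: "bipoly \<Rightarrow> real \<Rightarrow> real \<Rightarrow> real" where
  "eval2 f a b = poly (map_poly (\<lambda>c. poly c a) f) b"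

definition tdeg :: "bipoly \<Rightarrow> nat" where
  "tdeg f = Max ({0} \<union> {degree (coeff f i) + i | i. i \<le> degree f \<and> coeff f i \<noteq> 0})"

definition zset :: "bipoly \<Rightarrow> (real \<times> real) set" where
  "zset f = {(a, b). eval2 f a b = 0}"

definition plane_curve :: "(real \<times> real) set \<Rightarrow> bool" where
  "plane_curve C \<longleftrightarrow> infinite C \<and> (\<exists>f. f \<noteq> 0 \<and> C = zset f)"

definition curve_degree :: "(real \<times> real) set \<Rightarrow> nat" where
  "curve_degree C = (LEAST n. \<exists>f. f \<noteq> 0 \<and> C = zset f \<and> tdeg f = n)"

definition irreducible_curve :: "(real \<times> real) set \<Rightarrow> bool" where
  "irreducible_curve C \<longleftrightarrow> plane_curve C \<and> (\<exists>f. f \<noteq> 0 \<and> irreducible f \<and> C = zset f)"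

definition line_set :: "real \<Rightarrow> real \<Rightarrow> real \<Rightarrow> (real \<times> real) set" where
  "line_set a b c = {(x, y). a * x + b * y + c = 0}"

definition is_line :: "(real \<times> real) set \<Rightarrow> bool" where
  "is_line L \<longleftrightarrow> (\<exists>a b c. (a, b) \<noteq> (0, 0) \<and> L = line_set a b c)"

definition is_vertical_line :: "(real \<times> real) set \<Rightarrow> bool" where
  "is_vertical_line L \<longleftrightarrow> (\<exists>c. L = {(x, y). x = c})"

definition is_conic :: "(real \<times> real) set \<Rightarrow> bool" where
  "is_conic C \<longleftrightarrow> plane_curve C \<and> curve_degree C = 2 \<and>
     \<not> (\<exists>L1 L2. is_line L1 \<and> is_line L2 \<and> C = L1 \<union> L2)"

definition is_circle_with :: "(real \<times> real) set \<Rightarrow> real \<times> real \<Rightarrow> real \<Rightarrow> bool" where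
  "is_circle_with C c r \<longleftrightarrow> r > 0 \<and> C = sphere c r"

definition is_circle :: "(real \<times> real) set \<Rightarrow> bool" where
  "is_circle C \<longleftrightarrow> (\<exists>c r. is_circle_with C c r)"

text \<open>Reflection in the line a x + b y + c = 0 (assuming (a,b) \<noteq> (0,0)).\<close>
definition reflect :: "real \<Rightarrow> real \<Rightarrow> real \<Rightarrow> real \<times> real \<Rightarrow> real \<times> real" where
  "reflect a b c p = (let t = (a * fst p + b * snd p + c) / (a\<^sup>2 + b\<^sup>2)
                      in (fst p - 2 * a * t, snd p - 2 * b * t))"

definition circle_cond :: "(real \<times> real) set \<Rightarrow> (real \<times> real) set \<Rightarrow> bool" where
  "circle_cond C S \<longleftrightarrow> (\<forall>c r. is_circle_with C c r \<longrightarrow>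
      c \<notin> S \<and> (\<forall>r'>0. card (S \<inter> sphere c r') \<le> 1))"

text \<open>Conditions (5),(6): line C versus the point set S of the other curve.
  Lines parallel to a x + b y + c = 0 are a x + b y + c' = 0 (all c');
  lines orthogonal to it are b x - a y + c' = 0.\<close>
definition line_cond :: "(real \<times> real) set \<Rightarrow> (real \<times> real) set \<Rightarrow> bool" where
  "line_cond C S \<longleftrightarrow> (\<forall>a b c. (a, b) \<noteq> (0, 0) \<and> C = line_set a b c \<longrightarrow>
      (\<forall>c'. card (S \<inter> (line_set a b c' \<union> reflect a b c ` line_set a b c')) \<le> 1) \<and>
      (\<forall>c'. card (S \<inter> line_set b (- a) c') \<le> 1))"

text \<open>The set C_{ij} for points p = p_i, p' = p_j; elements (x,y,x',y') are
  encoded as ((x,y),(x',y')).\<close>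
definition Cpair :: "bipoly \<Rightarrow> real \<times> real \<Rightarrow> real \<times> real \<Rightarrow> ((real \<times> real) \<times> (real \<times> real)) set" where
  "Cpair f2 p p' = {((x, y), (x', y')).
      eval2 f2 x y = 0 \<and> eval2 f2 x' y' = 0 \<and>
      (x - fst p)\<^sup>2 + (y - snd p)\<^sup>2 = (x' - fst p')\<^sup>2 + (y' - snd p')\<^sup>2}"

end

theory Submission
  imports Defs "HOL-Computational_Algebra.Field_as_Ring"
begin

text \<open>The three defining equations of \<open>C\<^sub>i\<^sub>j\<close>, \<open>C\<^sub>k\<^sub>l\<close>, \<open>C\<^sub>u\<^sub>w\<close> equate squared distances, so
  subtracting them pairwise cancels the quadratic terms and leaves two linear equations in
  \<open>(x, y, x', y')\<close>. If these determine \<open>(x', y')\<close> as an affine function of \<open>(x, y)\<close>, the first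
  equation becomes a conic in \<open>(x, y)\<close>, which meets \<open>C\<^sub>2\<close> (irreducible, neither a line nor a
  conic) in at most \<open>2d\<close> points; this Bezout bound is proved by parametrising the conic by the
  pencil of lines through one common point. Otherwise some combination of the two linear equations
  confines \<open>(x, y)\<close> to a line, which meets \<open>C\<^sub>2\<close> in at most \<open>d\<close> points, and \<open>(x', y')\<close> to a
  line, on which the first equation leaves at most two choices. The three distance hypotheses rule
  out the combinations that would make these lines degenerate.\<close>

section \<open>Evaluation and total degree of bivariate polynomials\<close>

lemma eval2_alt: "eval2 f a b = poly (poly f [:b:]) a"
  unfolding eval2_def by (induction f) (auto simp: map_poly_pCons)

lemma eval2_0 [simp]: "eval2 0 a b = 0"
  by (simp add: eval2_alt)

lemma eval2_coeff_const [simp]: "eval2 [:p:] a b = poly p a"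
  by (simp add: eval2_alt)

lemma eval2_add [simp]: "eval2 (f + g) a b = eval2 f a b + eval2 g a b"
  by (simp add: eval2_alt)

lemma eval2_diff [simp]: "eval2 (f - g) a b = eval2 f a b - eval2 g a b"
  by (simp add: eval2_alt)

lemma eval2_mult [simp]: "eval2 (f * g) a b = eval2 f a b * eval2 g a b"
  by (simp add: eval2_alt)

lemma poly_eq_sum_upto:
  fixes p :: "'a::{comm_semiring_0,semiring_1} poly"
  assumes "degree p \<le> N"
  shows "poly p x = (\<Sum>i\<le>N. coeff p i * x ^ i)"
proof -
  have "poly p x = (\<Sum>i\<le>degree p. coeff p i * x ^ i)" by (rule poly_altdef)
  also have "\<dots> = (\<Sum>i\<le>N. coeff p i * x ^ i)"
    by (rule sum.mono_neutral_left) (use assms in \<open>auto simp: coeff_eq_0\<close>)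
  finally show ?thesis .
qed

lemma eval2_eq_sum_upto:
  assumes "degree f \<le> N"
  shows "eval2 f a b = (\<Sum>i\<le>N. poly (coeff f i) a * b ^ i)"
proof -
  have "degree (map_poly (\<lambda>c. poly c a) f) \<le> N"
    using assms map_poly_degree_leq order_trans by blast
  then show ?thesis
    unfolding eval2_def by (subst poly_eq_sum_upto) (auto simp: coeff_map_poly)
qed

lemma eval2_inject:
  assumes "\<And>a b. eval2 f a b = eval2 g a b"
  shows "f = g"
proof (rule poly_eqI)
  fix i
  have "map_poly (\<lambda>c. poly c a) f = map_poly (\<lambda>c. poly c a) g" for a
    using assms unfolding eval2_def by (subst poly_eq_poly_eq_iff[symmetric]) auto
  then have "poly (coeff f i) a = poly (coeff g i) a" for a
    by (metis coeff_map_poly poly_0)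
  then show "coeff f i = coeff g i"
    by (subst poly_eq_poly_eq_iff[symmetric]) auto
qed

lemma finite_tdeg_candidates:
  "finite ({0} \<union> {degree (coeff f i) + i | i. i \<le> degree f \<and> coeff f i \<noteq> 0})"
proof -
  have "{degree (coeff f i) + i | i. i \<le> degree f \<and> coeff f i \<noteq> 0} \<subseteq>
        (\<lambda>i. degree (coeff f i) + i) ` {..degree f}"
    by auto
  then show ?thesis using finite_subset by auto
qed

lemma tdeg_0 [simp]: "tdeg 0 = 0"
  unfolding tdeg_def by simp

lemma tdeg_ge:
  assumes "coeff (coeff f i) k \<noteq> 0"
  shows "k + i \<le> tdeg f"
proof -
  have ci: "coeff f i \<noteq> 0" using assms by auto
  then have "i \<le> degree f" by (simp add: le_degree)
  moreover have "k \<le> degree (coeff f i)" using assms by (simp add: le_degree)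
  moreover have "degree (coeff f i) + i \<le> tdeg f"
    unfolding tdeg_def using ci \<open>i \<le> degree f\<close>
    by (intro Max_ge[OF finite_tdeg_candidates]) auto
  ultimately show ?thesis by linarith
qed

lemma degree_coeff_add_le_tdeg:
  assumes "coeff f i \<noteq> 0"
  shows "degree (coeff f i) + i \<le> tdeg f"
  using assms tdeg_ge[of f i "degree (coeff f i)"] by simp

lemma degree_le_tdeg: "degree f \<le> tdeg f"
proof (cases "f = 0")
  case False
  then show ?thesis using degree_coeff_add_le_tdeg[of f "degree f"] by simp
qed simp

lemma degree_coeff_le_tdeg: "degree (coeff f i) \<le> tdeg f"
proof (cases "coeff f i = 0")
  case False
  then show ?thesis using degree_coeff_add_le_tdeg[of f i] by simp
qed simp

lemma tdeg_attained:
  assumes "f \<noteq> 0"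
  obtains i where "coeff f i \<noteq> 0" "degree (coeff f i) + i = tdeg f"
proof -
  let ?S = "{degree (coeff f i) + i | i. i \<le> degree f \<and> coeff f i \<noteq> 0}"
  have "tdeg f \<in> {0} \<union> ?S"
    unfolding tdeg_def by (rule Max_in[OF finite_tdeg_candidates]) auto
  then show ?thesis
  proof
    assume "tdeg f \<in> {0}"
    then have t0: "tdeg f = 0" by simp
    have lc: "coeff f (degree f) \<noteq> 0" using assms by simp
    then have "degree (coeff f (degree f)) + degree f = tdeg f"
      using degree_coeff_add_le_tdeg[OF lc] t0 by linarith
    with lc show ?thesis by (rule that)
  next
    assume "tdeg f \<in> ?S"
    then obtain i where "coeff f i \<noteq> 0" "degree (coeff f i) + i = tdeg f" by auto
    then show ?thesis by (rule that)
  qed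
qed

text \<open>The blow-up substitution \<open>(x, y) \<mapsto> (l, l m)\<close> turns the total degree of \<open>f\<close> into the
  degree in \<open>l\<close>; this transfers the degree laws of univariate polynomials to \<open>tdeg\<close>.\<close>

definition blowup :: "bipoly \<Rightarrow> bipoly" where
  "blowup f = (\<Sum>n\<le>tdeg f. monom (\<Sum>i\<le>n. monom (coeff (coeff f i) (n - i)) i) n)"

lemma coeff_blowup:
  "coeff (coeff (blowup f) n) i = (if i \<le> n then coeff (coeff f i) (n - i) else 0)"
proof (cases "n \<le> tdeg f")
  case True
  then show ?thesis
    unfolding blowup_def by (simp add: coeff_sum coeff_monom)
next
  case False
  have "coeff (coeff f i) (n - i) = 0" if "i \<le> n"
    using tdeg_ge[of f i "n - i"] False that by auto
  then show ?thesis using False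
    unfolding blowup_def by (simp add: coeff_sum coeff_monom)
qed

lemma degree_coeff_blowup: "degree (coeff (blowup f) n) \<le> n"
  by (rule degree_le) (simp add: coeff_blowup)

lemma degree_blowup_le:
  assumes "\<And>i k. coeff (coeff f i) k \<noteq> 0 \<Longrightarrow> k + i \<le> N"
  shows "degree (blowup f) \<le> N"
proof (rule degree_le, intro allI impI)
  fix n assume n: "N < n"
  have "coeff (coeff f i) (n - i) = 0" if "i \<le> n" for i
  proof (rule ccontr)
    assume "coeff (coeff f i) (n - i) \<noteq> 0"
    then have "n - i + i \<le> N" by (rule assms)
    then show False using n that by simp
  qed
  then have "coeff (coeff (blowup f) n) i = 0" for i
    by (simp add: coeff_blowup)
  then show "coeff (blowup f) n = 0" by (simp add: poly_eq_iff)
qed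

lemma degree_blowup: "degree (blowup f) = tdeg f"
proof (cases "f = 0")
  case True
  then show ?thesis using degree_blowup_le[of f 0] by simp
next
  case False
  then obtain i where i: "coeff f i \<noteq> 0" "degree (coeff f i) + i = tdeg f"
    by (rule tdeg_attained)
  moreover have "tdeg f - i = degree (coeff f i)" using i(2) by simp
  ultimately have "coeff (coeff (blowup f) (tdeg f)) i = lead_coeff (coeff f i)"
    by (simp add: coeff_blowup)
  then have "coeff (blowup f) (tdeg f) \<noteq> 0" using i(1) by auto
  then have "tdeg f \<le> degree (blowup f)" by (rule le_degree)
  moreover have "degree (blowup f) \<le> tdeg f" by (rule degree_blowup_le) (rule tdeg_ge)
  ultimately show ?thesis by simp
qed

lemma blowup_eq_0_iff [simp]: "blowup f = 0 \<longleftrightarrow> f = 0"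
proof
  assume b: "blowup f = 0"
  show "f = 0"
  proof (rule poly_eqI, rule poly_eqI)
    fix i k
    have "coeff (coeff f i) k = coeff (coeff (blowup f) (k + i)) i"
      by (simp add: coeff_blowup)
    then show "coeff (coeff f i) k = coeff (coeff 0 i) k" using b by simp
  qed
qed (simp add: blowup_def)

lemma eval2_blowup: "eval2 (blowup f) m l = eval2 f l (l * m)"
proof -
  define D where "D = tdeg f"
  define G where "G = (\<lambda>i j. coeff (coeff f i) j * m ^ i * l ^ (i + j))"
  have "eval2 (blowup f) m l = (\<Sum>n\<le>D. poly (coeff (blowup f) n) m * l ^ n)"
    by (rule eval2_eq_sum_upto) (simp add: D_def degree_blowup)
  also have "\<dots> = (\<Sum>n\<le>D. \<Sum>i\<le>n. G i (n - i))"
  proof (rule sum.cong[OF refl])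
    fix n
    have "poly (coeff (blowup f) n) m = (\<Sum>i\<le>n. coeff (coeff (blowup f) n) i * m ^ i)"
      by (rule poly_eq_sum_upto) (rule degree_coeff_blowup)
    also have "\<dots> = (\<Sum>i\<le>n. coeff (coeff f i) (n - i) * m ^ i)"
      by (rule sum.cong) (auto simp: coeff_blowup)
    finally show "poly (coeff (blowup f) n) m * l ^ n = (\<Sum>i\<le>n. G i (n - i))"
      unfolding G_def by (simp add: sum_distrib_right mult.assoc)
  qed
  also have "\<dots> = (\<Sum>(i,j)\<in>{(i,j). i + j \<le> D}. G i j)"
    by (rule sum.triangle_reindex_eq[symmetric])
  also have "\<dots> = (\<Sum>(i,j)\<in>{..D} \<times> {..D}. G i j)"
  proof (rule sum.mono_neutral_left)
    have "G i j = 0" if "\<not> i + j \<le> D" for i j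
      using tdeg_ge[of f i j] that unfolding D_def G_def by (cases "coeff (coeff f i) j = 0") auto
    then show "\<forall>x\<in>{..D} \<times> {..D} - {(i, j). i + j \<le> D}. (case x of (i, j) \<Rightarrow> G i j) = 0"
      by auto
  qed auto
  also have "\<dots> = (\<Sum>i\<le>D. \<Sum>j\<le>D. G i j)"
    by (rule sum.cartesian_product[symmetric])
  also have "\<dots> = (\<Sum>i\<le>D. poly (coeff f i) l * (l * m) ^ i)"
  proof (rule sum.cong[OF refl])
    fix i
    have "poly (coeff f i) l = (\<Sum>j\<le>D. coeff (coeff f i) j * l ^ j)"
      by (rule poly_eq_sum_upto) (simp add: D_def degree_coeff_le_tdeg)
    then show "(\<Sum>j\<le>D. G i j) = poly (coeff f i) l * (l * m) ^ i"
      by (simp add: G_def sum_distrib_left sum_distrib_right power_add power_mult_distrib mult_ac)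
  qed
  also have "\<dots> = eval2 f l (l * m)"
    by (rule eval2_eq_sum_upto[symmetric]) (simp add: D_def degree_le_tdeg)
  finally show ?thesis .
qed

lemma blowup_mult: "blowup (f * g) = blowup f * blowup g"
  by (rule eval2_inject) (simp add: eval2_blowup)

lemma blowup_add: "blowup (f + g) = blowup f + blowup g"
  by (rule eval2_inject) (simp add: eval2_blowup)

lemma blowup_diff: "blowup (f - g) = blowup f - blowup g"
  by (rule eval2_inject) (simp add: eval2_blowup)

lemma tdeg_mult:
  assumes "f \<noteq> 0" "g \<noteq> 0"
  shows "tdeg (f * g) = tdeg f + tdeg g"
  using degree_mult_eq[of "blowup f" "blowup g"] assms
  by (simp add: degree_blowup[symmetric] blowup_mult)

lemma tdeg_mult_le: "tdeg (f * g) \<le> tdeg f + tdeg g"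
  using degree_mult_le[of "blowup f" "blowup g"] by (simp add: degree_blowup[symmetric] blowup_mult)

lemma tdeg_add_le: "tdeg (f + g) \<le> max (tdeg f) (tdeg g)"
  using degree_add_le_max[of "blowup f" "blowup g"] by (simp add: degree_blowup[symmetric] blowup_add)

lemma tdeg_diff_le: "tdeg (f - g) \<le> max (tdeg f) (tdeg g)"
  using degree_diff_le_max[of "blowup f" "blowup g"] by (simp add: degree_blowup[symmetric] blowup_diff)

lemma tdeg_leI:
  assumes "\<And>i k. coeff (coeff f i) k \<noteq> 0 \<Longrightarrow> k + i \<le> N"
  shows "tdeg f \<le> N"
  using degree_blowup_le[OF assms] by (simp add: degree_blowup)

lemma tdeg_const [simp]: "tdeg [:[:c:]:] = 0"
proof -
  have "tdeg [:[:c:]:] \<le> 0"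
    by (rule tdeg_leI) (auto simp: coeff_pCons split: nat.splits)
  then show ?thesis by simp
qed

lemma tdeg_1 [simp]: "tdeg 1 = 0"
  using tdeg_const[of 1] by (simp add: one_pCons)

lemma tdeg_eq_0_iff_const: "tdeg f = 0 \<longleftrightarrow> f = [:[:coeff (coeff f 0) 0:]:]"
proof
  assume t: "tdeg f = 0"
  show "f = [:[:coeff (coeff f 0) 0:]:]"
  proof (rule poly_eqI, rule poly_eqI)
    fix i k
    have "coeff (coeff f i) k = 0" if "0 < k + i"
      using tdeg_ge[of f i k] t that by fastforce
    then show "coeff (coeff f i) k = coeff (coeff [:[:coeff (coeff f 0) 0:]:] i) k"
      by (cases i; cases k) (auto simp: coeff_pCons split: nat.splits)
  qed
next
  assume f: "f = [:[:coeff (coeff f 0) 0:]:]"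
  show "tdeg f = 0" by (subst f) (rule tdeg_const)
qed

lemma is_unit_iff_tdeg_0: "is_unit f \<longleftrightarrow> f \<noteq> 0 \<and> tdeg f = 0"
proof
  assume "is_unit f"
  then obtain g where g: "1 = f * g" by (auto elim: dvdE)
  then have "f \<noteq> 0" "g \<noteq> 0" by auto
  with g tdeg_mult[of f g] show "f \<noteq> 0 \<and> tdeg f = 0" by simp
next
  assume a: "f \<noteq> 0 \<and> tdeg f = 0"
  define c where "c = coeff (coeff f 0) 0"
  have "f = [:[:c:]:]" using a tdeg_eq_0_iff_const c_def by auto
  moreover have "c \<noteq> 0" using a calculation by auto
  ultimately show "is_unit f" by (simp add: is_unit_const_poly_iff dvd_field_iff)
qed

lemma tdeg_1_irreducible:
  assumes "tdeg f = 1"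
  shows "irreducible f"
proof (rule irreducibleI)
  show "f \<noteq> 0" "\<not> is_unit f" using assms by (auto simp: is_unit_iff_tdeg_0)
  fix a b assume ab: "f = a * b"
  then have "a \<noteq> 0" "b \<noteq> 0" using \<open>f \<noteq> 0\<close> by auto
  then have "tdeg a + tdeg b = 1" using tdeg_mult ab assms by metis
  then show "is_unit a \<or> is_unit b"
    using \<open>a \<noteq> 0\<close> \<open>b \<noteq> 0\<close> by (auto simp: is_unit_iff_tdeg_0)
qed

definition affine_bipoly :: "real \<Rightarrow> real \<Rightarrow> real \<Rightarrow> bipoly" where
  "affine_bipoly a b c = [:[:c, a:], [:b:]:]"

lemma eval2_affine_bipoly [simp]: "eval2 (affine_bipoly a b c) x y = a * x + b * y + c"
  by (simp add: affine_bipoly_def eval2_alt algebra_simps)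

lemma zset_affine_bipoly: "zset (affine_bipoly a b c) = line_set a b c"
  unfolding zset_def line_set_def by simp

lemma tdeg_affine_bipoly_le: "tdeg (affine_bipoly a b c) \<le> 1"
  unfolding affine_bipoly_def
  by (rule tdeg_leI) (auto simp: coeff_pCons split: nat.splits)

lemma tdeg_affine_bipoly:
  assumes "(a, b) \<noteq> (0, 0)"
  shows "tdeg (affine_bipoly a b c) = 1"
proof -
  have "tdeg (affine_bipoly a b c) \<noteq> 0"
  proof
    assume "tdeg (affine_bipoly a b c) = 0"
    then have "affine_bipoly a b c = [:[:c:]:]"
      by (subst (asm) tdeg_eq_0_iff_const) (simp add: affine_bipoly_def)
    then show False using assms by (simp add: affine_bipoly_def)
  qed
  then show ?thesis using tdeg_affine_bipoly_le[of a b c] by linarith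
qed

lemma tdeg_le_1_affine:
  assumes "tdeg f \<le> 1"
  shows "f = affine_bipoly (coeff (coeff f 0) 1) (coeff (coeff f 1) 0) (coeff (coeff f 0) 0)"
proof (rule poly_eqI, rule poly_eqI)
  fix i k
  have "coeff (coeff f i) k = 0" if "1 < k + i"
    using tdeg_ge[of f i k] assms that by fastforce
  then show "coeff (coeff f i) k = coeff (coeff (affine_bipoly (coeff (coeff f 0) 1)
      (coeff (coeff f 1) 0) (coeff (coeff f 0) 0)) i) k"
    unfolding affine_bipoly_def
    by (cases i; cases k) (auto simp: coeff_pCons split: nat.splits)
qed

text \<open>The closure rules below are how the conic of the generic case is recognised.\<close>

definition bipoly_fun :: "nat \<Rightarrow> (real \<Rightarrow> real \<Rightarrow> real) \<Rightarrow> bool" where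
  "bipoly_fun n F \<longleftrightarrow> (\<exists>p. tdeg p \<le> n \<and> (\<forall>x y. eval2 p x y = F x y))"

lemma bipoly_fun_const: "bipoly_fun n (\<lambda>x y. c)"
  unfolding bipoly_fun_def by (rule exI[of _ "[:[:c:]:]"]) simp

lemma bipoly_fun_coordinates: "bipoly_fun 1 (\<lambda>x y. x)" "bipoly_fun 1 (\<lambda>x y. y)"
  unfolding bipoly_fun_def
  by (intro exI[of _ "affine_bipoly 1 0 0"] exI[of _ "affine_bipoly 0 1 0"] conjI
      tdeg_affine_bipoly_le; simp)+

lemma bipoly_fun_add:
  "bipoly_fun n F \<Longrightarrow> bipoly_fun n G \<Longrightarrow> bipoly_fun n (\<lambda>x y. F x y + G x y)"
  unfolding bipoly_fun_def using tdeg_add_le by (metis eval2_add max.bounded_iff order_trans)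

lemma bipoly_fun_diff:
  "bipoly_fun n F \<Longrightarrow> bipoly_fun n G \<Longrightarrow> bipoly_fun n (\<lambda>x y. F x y - G x y)"
  unfolding bipoly_fun_def using tdeg_diff_le by (metis eval2_diff max.bounded_iff order_trans)

lemma bipoly_fun_mult:
  assumes "bipoly_fun n F" "bipoly_fun m G"
  shows "bipoly_fun (n + m) (\<lambda>x y. F x y * G x y)"
proof -
  obtain p q where "tdeg p \<le> n" "tdeg q \<le> m" "\<forall>x y. eval2 p x y = F x y" "\<forall>x y. eval2 q x y = G x y"
    using assms unfolding bipoly_fun_def by blast
  then show ?thesis
    unfolding bipoly_fun_def using tdeg_mult_le[of p q] by (intro exI[of _ "p * q"]) auto
qed

lemma bipoly_fun_scale: "bipoly_fun n F \<Longrightarrow> bipoly_fun n (\<lambda>x y. c * F x y)"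
  using bipoly_fun_mult[OF bipoly_fun_const[of 0 c]] by simp

lemma bipoly_fun_scale_right: "bipoly_fun n F \<Longrightarrow> bipoly_fun n (\<lambda>x y. F x y * c)"
  using bipoly_fun_scale[of n F c] by (simp add: mult.commute)

lemma bipoly_fun_divide: "bipoly_fun n F \<Longrightarrow> bipoly_fun n (\<lambda>x y. F x y / c)"
  using bipoly_fun_scale[of n F "inverse c"] by (simp add: divide_inverse mult.commute)

lemma bipoly_fun_square:
  assumes "bipoly_fun 1 F"
  shows "bipoly_fun 2 (\<lambda>x y. (F x y)\<^sup>2)"
proof -
  have "bipoly_fun (1 + 1) (\<lambda>x y. F x y * F x y)" by (rule bipoly_fun_mult[OF assms assms])
  then show ?thesis by (simp add: power2_eq_square numeral_2_eq_2)
qed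

text \<open>In \<open>eval2 H m l\<close> below, \<open>H\<close> is read as a polynomial in the line parameter \<open>l\<close> whose
  coefficient of \<open>l\<^sup>j\<close> is a polynomial of degree at most \<open>j\<close> in the slope parameter \<open>m\<close>.\<close>

definition pencil_expansion ::
    "real \<Rightarrow> real \<Rightarrow> real poly \<Rightarrow> real poly \<Rightarrow> nat \<Rightarrow> (real \<Rightarrow> real \<Rightarrow> real) \<Rightarrow> bool" where
  "pencil_expansion x0 y0 a b d F \<longleftrightarrow> (\<exists>H. degree H \<le> d \<and> (\<forall>j. degree (coeff H j) \<le> j) \<and>
      (\<forall>l m. F (x0 + l * poly a m) (y0 + l * poly b m) = eval2 H m l))"

lemma pencil_expansion_const: "pencil_expansion x0 y0 a b 0 (\<lambda>x y. c)"
  unfolding pencil_expansion_def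
  by (intro exI[of _ "[:[:c:]:]"]) (auto simp: coeff_pCons split: nat.splits)

lemma pencil_expansion_coordinate:
  assumes "degree a \<le> 1" "degree b \<le> 1"
  shows "pencil_expansion x0 y0 a b 1 (\<lambda>x y. x)" "pencil_expansion x0 y0 a b 1 (\<lambda>x y. y)"
  unfolding pencil_expansion_def
   apply (rule exI[of _ "[:[:x0:], a:]"])
   apply (use assms(1) in \<open>auto simp: eval2_alt coeff_pCons split: nat.splits\<close>)[1]
  apply (rule exI[of _ "[:[:y0:], b:]"])
  apply (use assms(2) in \<open>auto simp: eval2_alt coeff_pCons split: nat.splits\<close>)
  done

lemma pencil_expansion_mono:
  "pencil_expansion x0 y0 a b d F \<Longrightarrow> d \<le> d' \<Longrightarrow> pencil_expansion x0 y0 a b d' F"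
  unfolding pencil_expansion_def by (meson order_trans)

lemma pencil_expansion_add:
  assumes "pencil_expansion x0 y0 a b d F" "pencil_expansion x0 y0 a b d G"
  shows "pencil_expansion x0 y0 a b d (\<lambda>x y. F x y + G x y)"
proof -
  obtain H1 H2 where "degree H1 \<le> d" "\<forall>j. degree (coeff H1 j) \<le> j"
     "\<forall>l m. F (x0 + l * poly a m) (y0 + l * poly b m) = eval2 H1 m l"
     "degree H2 \<le> d" "\<forall>j. degree (coeff H2 j) \<le> j"
     "\<forall>l m. G (x0 + l * poly a m) (y0 + l * poly b m) = eval2 H2 m l"
    using assms unfolding pencil_expansion_def by blast
  then show ?thesis unfolding pencil_expansion_def
    by (intro exI[of _ "H1 + H2"]) (auto intro: degree_add_le)
qed

lemma pencil_expansion_mult: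
  assumes "pencil_expansion x0 y0 a b d1 F" "pencil_expansion x0 y0 a b d2 G"
  shows "pencil_expansion x0 y0 a b (d1 + d2) (\<lambda>x y. F x y * G x y)"
proof -
  obtain H1 H2 where H: "degree H1 \<le> d1" "\<forall>j. degree (coeff H1 j) \<le> j"
     "\<forall>l m. F (x0 + l * poly a m) (y0 + l * poly b m) = eval2 H1 m l"
     "degree H2 \<le> d2" "\<forall>j. degree (coeff H2 j) \<le> j"
     "\<forall>l m. G (x0 + l * poly a m) (y0 + l * poly b m) = eval2 H2 m l"
    using assms unfolding pencil_expansion_def by blast
  have "degree (coeff (H1 * H2) j) \<le> j" for j
    unfolding coeff_mult
  proof (rule degree_sum_le)
    fix i assume "i \<in> {..j}"
    then have "degree (coeff H1 i) + degree (coeff H2 (j - i)) \<le> j"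
      using H(2,5) by (metis add_le_mono atMost_iff le_add_diff_inverse)
    then show "degree (coeff H1 i * coeff H2 (j - i)) \<le> j"
      by (rule order_trans[OF degree_mult_le])
  qed simp
  moreover have "degree (H1 * H2) \<le> d1 + d2"
    using H(1,4) by (meson add_le_mono degree_mult_le order_trans)
  ultimately show ?thesis
    unfolding pencil_expansion_def using H(3,6) by (intro exI[of _ "H1 * H2"]) auto
qed

lemma pencil_expansion_sum:
  assumes "finite A" "\<And>i. i \<in> A \<Longrightarrow> pencil_expansion x0 y0 a b d (F i)"
  shows "pencil_expansion x0 y0 a b d (\<lambda>x y. \<Sum>i\<in>A. F i x y)"
  using assms
proof (induction A rule: finite_induct)
  case empty
  then show ?case using pencil_expansion_mono[OF pencil_expansion_const[of x0 y0 a b 0]] by simp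
next
  case (insert i A)
  then show ?case
    using pencil_expansion_add[of x0 y0 a b d "F i" "\<lambda>x y. \<Sum>i\<in>A. F i x y"] by simp
qed

lemma pencil_expansion_power:
  assumes "pencil_expansion x0 y0 a b d F"
  shows "pencil_expansion x0 y0 a b (n * d) (\<lambda>x y. F x y ^ n)"
proof (induction n)
  case 0
  then show ?case using pencil_expansion_const[of x0 y0 a b 1] by simp
next
  case (Suc n)
  then show ?case using pencil_expansion_mult[OF assms Suc] by (simp add: add.commute)
qed

lemma pencil_expansion_eval2:
  assumes "degree a \<le> 1" "degree b \<le> 1"
  shows "pencil_expansion x0 y0 a b (tdeg f) (eval2 f)"
proof -
  define D where "D = tdeg f"
  have monomials: "pencil_expansion x0 y0 a b D (\<lambda>x y. coeff (coeff f i) k * x ^ k * y ^ i)" for i k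
  proof (cases "coeff (coeff f i) k = 0")
    case True
    then show ?thesis using pencil_expansion_mono[OF pencil_expansion_const[of x0 y0 a b 0]] by simp
  next
    case False
    have "pencil_expansion x0 y0 a b (0 + k * 1 + i * 1) (\<lambda>x y. coeff (coeff f i) k * x ^ k * y ^ i)"
      by (intro pencil_expansion_mult pencil_expansion_const pencil_expansion_power
          pencil_expansion_coordinate assms)
    then show ?thesis using tdeg_ge[OF False] pencil_expansion_mono unfolding D_def by simp
  qed
  have "eval2 f x y = (\<Sum>i\<le>D. \<Sum>k\<le>D. coeff (coeff f i) k * x ^ k * y ^ i)" for x y
  proof -
    have "eval2 f x y = (\<Sum>i\<le>D. poly (coeff f i) x * y ^ i)"
      by (rule eval2_eq_sum_upto) (simp add: D_def degree_le_tdeg)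
    also have "\<dots> = (\<Sum>i\<le>D. \<Sum>k\<le>D. coeff (coeff f i) k * x ^ k * y ^ i)"
      by (simp add: poly_eq_sum_upto[OF degree_coeff_le_tdeg[of f _]] D_def sum_distrib_right)
    finally show ?thesis .
  qed
  then have "eval2 f = (\<lambda>x y. \<Sum>i\<le>D. \<Sum>k\<le>D. coeff (coeff f i) k * x ^ k * y ^ i)"
    by (intro ext)
  moreover have "pencil_expansion x0 y0 a b D \<dots>"
    by (intro pencil_expansion_sum monomials) auto
  ultimately show ?thesis unfolding D_def by simp
qed

lemma pencil_expansionE:
  assumes "pencil_expansion x0 y0 a b d F"
  obtains h where "\<And>j. degree (h j) \<le> j"
    "\<And>l m. F (x0 + l * poly a m) (y0 + l * poly b m) = (\<Sum>j\<le>d. poly (h j) m * l ^ j)"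
proof -
  obtain H where "degree H \<le> d" "\<forall>j. degree (coeff H j) \<le> j"
     "\<forall>l m. F (x0 + l * poly a m) (y0 + l * poly b m) = eval2 H m l"
    using assms unfolding pencil_expansion_def by blast
  then show ?thesis by (intro that[of "coeff H"]) (auto simp: eval2_eq_sum_upto)
qed

section \<open>Finiteness of common zeros\<close>

lemma irreducible_not_dvd_bezout:
  fixes F G :: "'a::field poly"
  assumes irr: "irreducible F" and nd: "\<not> F dvd G"
  obtains U V where "U * F + V * G = 1"
proof -
  define I where "I = {U * F + V * G | U V. True}"
  have FI: "F \<in> I" unfolding I_def by (rule CollectI, rule exI[of _ 1], rule exI[of _ 0]) simp
  have GI: "G \<in> I" unfolding I_def by (rule CollectI, rule exI[of _ 0], rule exI[of _ 1]) simp
  have "F \<noteq> 0" using irr by auto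
  then have ex: "\<exists>h\<in>I. h \<noteq> 0 \<and> degree h = degree F" using FI by blast
  define n where "n = (LEAST n. \<exists>h\<in>I. h \<noteq> 0 \<and> degree h = n)"
  obtain h where h: "h \<in> I" "h \<noteq> 0" "degree h = n"
    using LeastI_ex[of "\<lambda>n. \<exists>h\<in>I. h \<noteq> 0 \<and> degree h = n"] ex unfolding n_def by blast
  have minimal: "n \<le> degree h'" if "h' \<in> I" "h' \<noteq> 0" for h'
    unfolding n_def using that by (intro Least_le) blast
  have closed: "A - Q * h \<in> I" if "A \<in> I" for A Q
  proof -
    obtain U V U' V' where "A = U * F + V * G" "h = U' * F + V' * G"
      using \<open>A \<in> I\<close> h(1) unfolding I_def by blast
    then have "A - Q * h = (U - Q * U') * F + (V - Q * V') * G"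
      by (simp add: algebra_simps)
    then show ?thesis unfolding I_def by blast
  qed
  text \<open>Euclidean division by a nonzero element of minimal degree in the ideal \<open>I\<close>.\<close>
  have divides: "h dvd A" if "A \<in> I" for A
  proof (rule ccontr)
    assume "\<not> h dvd A"
    then have m0: "A mod h \<noteq> 0" by (simp add: mod_eq_0_iff_dvd)
    have "A mod h \<in> I" using closed[OF that, of "A div h"] by (simp add: minus_div_mult_eq_mod)
    then have "n \<le> degree (A mod h)" using minimal m0 by blast
    then show False using degree_mod_less'[OF h(2) m0] h(3) by simp
  qed
  obtain k where k: "F = h * k" using divides[OF FI] by (auto elim: dvdE)
  have "\<not> is_unit k"
  proof
    assume "is_unit k"
    then have "F dvd h" using k by (metis dvd_mult_unit_iff dvd_refl)
    then show False using divides[OF GI] nd dvd_trans by blast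
  qed
  then have "is_unit h" using irreducibleD[OF irr k] by blast
  then obtain h' where h': "1 = h * h'" by (auto elim: dvdE)
  obtain U V where "h = U * F + V * G" using h(1) unfolding I_def by blast
  with h' have "(h' * U) * F + (h' * V) * G = 1" by (simp add: algebra_simps)
  then show ?thesis by (rule that)
qed

lemma fract_poly_clear_denominator:
  fixes U :: "'a::{factorial_ring_gcd,semiring_gcd_mult_normalize} fract poly"
  obtains d U' where "d \<noteq> 0" "smult (to_fract d) U = fract_poly U'"
proof -
  obtain c U'' where U: "U = smult c (fract_poly U'')" by (rule content_decompose_fract[of U])
  obtain a b where ab: "c = Fract a b" "b \<noteq> 0" by (cases c) auto
  have "smult (to_fract b) U = fract_poly (smult a U'')"
    using ab by (simp add: U Fract_conv_to_fract)
  with ab show ?thesis using that by blast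
qed

text \<open>Viewing bivariate polynomials as polynomials in \<open>y\<close> over \<open>\<real>[x]\<close>, Bezout's identity over
  the fraction field \<open>\<real>(x)\<close> gives a nonzero polynomial in \<open>x\<close> alone in the ideal \<open>(f, g)\<close>.\<close>

lemma bipoly_bezout:
  fixes f g :: bipoly
  assumes irr: "irreducible f" and deg: "degree f \<noteq> 0" and nd: "\<not> f dvd g"
  obtains A B D where "D \<noteq> 0" "A * f + B * g = [:D:]"
proof -
  have irrF: "irreducible (fract_poly f)" and cont: "content f = 1"
    using nonconst_poly_irreducible_iff[OF deg] irr by auto
  have "\<not> fract_poly f dvd fract_poly g"
    using fract_poly_dvdD[OF _ cont] nd by blast
  then obtain U V where UV: "U * fract_poly f + V * fract_poly g = 1"
    using irreducible_not_dvd_bezout[OF irrF] by blast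
  obtain dU U' where U': "dU \<noteq> 0" "smult (to_fract dU) U = fract_poly U'"
    by (rule fract_poly_clear_denominator)
  obtain dV V' where V': "dV \<noteq> 0" "smult (to_fract dV) V = fract_poly V'"
    by (rule fract_poly_clear_denominator)
  have "fract_poly (smult dV U' * f + smult dU V' * g) =
        smult (to_fract dV) (fract_poly U') * fract_poly f +
        smult (to_fract dU) (fract_poly V') * fract_poly g"
    by simp
  also have "\<dots> = smult (to_fract (dU * dV)) (U * fract_poly f + V * fract_poly g)"
    unfolding U'(2)[symmetric] V'(2)[symmetric] by (simp add: algebra_simps smult_add_right)
  also have "\<dots> = fract_poly [:dU * dV:]" using UV by (simp add: map_poly_pCons)
  finally have "smult dV U' * f + smult dU V' * g = [:dU * dV:]"
    by (simp only: fract_poly_eq_iff)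
  moreover have "dU * dV \<noteq> 0" using U' V' by simp
  ultimately show ?thesis using that by blast
qed

lemma vertical_line_dvd:
  assumes "\<And>y. eval2 f x0 y = 0"
  shows "[:[:- x0, 1:]:] dvd f"
proof -
  have "map_poly (\<lambda>c. poly c x0) f = 0"
    using assms unfolding eval2_def by (simp add: poly_all_0_iff_0[symmetric])
  then have "poly (coeff f n) x0 = 0" for n by (metis coeff_0 coeff_map_poly poly_0)
  then show ?thesis by (simp add: const_poly_dvd_iff poly_eq_0_iff_dvd)
qed

lemma finite_vertical_zeros:
  assumes "\<not> [:[:- x0, 1:]:] dvd f"
  shows "finite {y. eval2 f x0 y = 0}"
proof -
  have "map_poly (\<lambda>c. poly c x0) f \<noteq> 0"
    using assms vertical_line_dvd[of f x0] unfolding eval2_def by force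
  then show ?thesis unfolding eval2_def by (rule poly_roots_finite)
qed

lemma finite_common_zeros:
  fixes f g :: bipoly
  assumes irr: "irreducible f" and nd: "\<not> f dvd g"
  shows "finite (zset f \<inter> zset g)"
proof -
  let ?Z = "zset f \<inter> zset g"
  have "finite (fst ` ?Z)"
  proof (cases "degree f = 0")
    case True
    then obtain c where c: "f = [:c:]" by (metis degree_eq_zeroE)
    then have "c \<noteq> 0" using irr by auto
    have "fst ` ?Z \<subseteq> {x. poly c x = 0}" by (auto simp: zset_def c)
    then show ?thesis using poly_roots_finite[OF \<open>c \<noteq> 0\<close>] finite_subset by blast
  next
    case False
    obtain A B D where ABD: "D \<noteq> 0" "A * f + B * g = [:D:]"
      by (rule bipoly_bezout[OF irr False nd])
    have "poly D x = 0" if "(x, y) \<in> ?Z" for x y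
    proof -
      have "poly D x = eval2 (A * f + B * g) x y" using ABD(2) by simp
      also have "\<dots> = 0" using that by (simp add: zset_def)
      finally show ?thesis .
    qed
    then have "fst ` ?Z \<subseteq> {x. poly D x = 0}" by force
    then show ?thesis using poly_roots_finite[OF \<open>D \<noteq> 0\<close>] finite_subset by blast
  qed
  moreover have "finite {y. (x0, y) \<in> ?Z}" for x0
  proof (cases "[:[:- x0, 1:]:] dvd f")
    case True
    have "\<not> [:[:- x0, 1:]:] dvd g"
    proof
      assume g: "[:[:- x0, 1:]:] dvd g"
      obtain k where k: "f = [:[:- x0, 1:]:] * k" using True by (auto elim: dvdE)
      have "\<not> is_unit [:[:- x0, 1:]:]" by (simp add: is_unit_const_poly_iff is_unit_poly_iff)
      then have "is_unit k" using irreducibleD[OF irr k] by blast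
      then have "f dvd [:[:- x0, 1:]:]" using k by (metis dvd_mult_unit_iff dvd_refl)
      then show False using g nd dvd_trans by blast
    qed
    then show ?thesis
      by (rule finite_subset[rotated, OF finite_vertical_zeros]) (auto simp: zset_def)
  next
    case False
    then show ?thesis
      by (rule finite_subset[rotated, OF finite_vertical_zeros]) (auto simp: zset_def)
  qed
  ultimately have "finite (\<Union>x0\<in>fst ` ?Z. Pair x0 ` {y. (x0, y) \<in> ?Z})" by blast
  moreover have "?Z \<subseteq> (\<Union>x0\<in>fst ` ?Z. Pair x0 ` {y. (x0, y) \<in> ?Z})" by force
  ultimately show ?thesis by (rule finite_subset[rotated])
qed

lemma irreducible_if_minimal_degree:
  assumes "irreducible_curve C" and "f \<noteq> 0" and "C = zset f" and "tdeg f = curve_degree C"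
  shows "irreducible f"
proof -
  obtain g where g: "g \<noteq> 0" "irreducible g" "C = zset g" and "infinite C"
    using assms(1) unfolding irreducible_curve_def plane_curve_def by blast
  then have "g dvd f"
    using finite_common_zeros[OF g(2), of f] assms(3) by auto
  then obtain h where h: "f = g * h" by (auto elim: dvdE)
  have "h \<noteq> 0" using h assms(2) by auto
  have "curve_degree C \<le> tdeg g"
    unfolding curve_degree_def by (rule Least_le) (use g in blast)
  then have "tdeg h = 0" using assms(4) h tdeg_mult[OF g(1) \<open>h \<noteq> 0\<close>] by simp
  then have "is_unit h" using \<open>h \<noteq> 0\<close> by (simp add: is_unit_iff_tdeg_0)
  then show ?thesis using h g(2) irreducible_mult_unit_left[of h g] by (simp add: mult.commute)
qed

section \<open>Curves that are neither lines nor conics\<close>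

definition beyond_conic :: "bipoly \<Rightarrow> bool" where
  "beyond_conic f \<longleftrightarrow> irreducible f \<and> infinite (zset f) \<and> \<not> is_line (zset f) \<and>
     \<not> is_conic (zset f) \<and> curve_degree (zset f) = tdeg f"

lemma beyond_conic_nonzero: "beyond_conic f \<Longrightarrow> f \<noteq> 0"
  unfolding beyond_conic_def by auto

lemma two_le_tdeg_beyond_conic:
  assumes "beyond_conic f"
  shows "2 \<le> tdeg f"
proof (rule ccontr)
  assume "\<not> 2 \<le> tdeg f"
  then have "tdeg f \<le> 1" by simp
  then obtain a b c where f: "f = affine_bipoly a b c" by (rule that[OF tdeg_le_1_affine])
  show False
  proof (cases "(a, b) = (0, 0)")
    case True
    then have f: "f = [:[:c:]:]" using f by (simp add: affine_bipoly_def)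
    then have "c \<noteq> 0" using beyond_conic_nonzero[OF assms] by auto
    then have "zset f = {}" using f by (simp add: zset_def)
    then show False using assms unfolding beyond_conic_def by auto
  next
    case False
    then have "is_line (zset f)" unfolding is_line_def f zset_affine_bipoly by blast
    then show False using assms unfolding beyond_conic_def by blast
  qed
qed

lemma beyond_conic_Int_line_finite:
  assumes "beyond_conic f" "(a, b) \<noteq> (0, 0)"
  shows "finite (zset f \<inter> line_set a b c)"
proof (rule ccontr)
  assume inf: "infinite (zset f \<inter> line_set a b c)"
  have t1: "tdeg (affine_bipoly a b c) = 1" using tdeg_affine_bipoly[OF assms(2)] .
  have "affine_bipoly a b c dvd f"
  proof (rule ccontr)
    assume "\<not> affine_bipoly a b c dvd f"
    then have "finite (zset (affine_bipoly a b c) \<inter> zset f)"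
      by (rule finite_common_zeros[OF tdeg_1_irreducible[OF t1]])
    then show False using inf by (simp add: zset_affine_bipoly Int_commute)
  qed
  then obtain k where k: "f = affine_bipoly a b c * k" by (auto elim: dvdE)
  have "\<not> is_unit (affine_bipoly a b c)" using t1 by (simp add: is_unit_iff_tdeg_0)
  then have "is_unit k" using irreducibleD[OF _ k] assms(1) unfolding beyond_conic_def by blast
  then have "k \<noteq> 0" "tdeg k = 0" by (simp_all add: is_unit_iff_tdeg_0)
  moreover have "affine_bipoly a b c \<noteq> 0" using t1 by auto
  ultimately have "tdeg f = 1" using k t1 tdeg_mult[of "affine_bipoly a b c" k] by simp
  then show False using two_le_tdeg_beyond_conic[OF assms(1)] by simp
qed

lemma beyond_conic_not_dvd:
  assumes "beyond_conic f" "g \<noteq> 0" "tdeg g \<le> 2"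
  shows "\<not> f dvd g"
proof
  assume "f dvd g"
  then obtain h where h: "g = f * h" by (auto elim: dvdE)
  then have "h \<noteq> 0" using assms(2) by auto
  then have "tdeg f \<le> 2" using tdeg_mult[OF beyond_conic_nonzero[OF assms(1)]] h assms(3) by simp
  then have "curve_degree (zset f) = 2"
    using two_le_tdeg_beyond_conic[OF assms(1)] assms(1) unfolding beyond_conic_def by simp
  moreover have "plane_curve (zset f)"
    using assms(1) beyond_conic_nonzero[OF assms(1)]
    unfolding plane_curve_def beyond_conic_def by blast
  ultimately obtain L1 L2 where L: "is_line L1" "is_line L2" "zset f = L1 \<union> L2"
    using assms(1) unfolding beyond_conic_def is_conic_def by blast
  have "infinite L1 \<or> infinite L2" using assms(1) L(3) unfolding beyond_conic_def by auto
  then obtain L where "is_line L" "infinite L" "L \<subseteq> zset f" using L by blast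
  moreover from \<open>is_line L\<close> obtain a b c where "(a, b) \<noteq> (0, 0)" "L = line_set a b c"
    unfolding is_line_def by blast
  ultimately have "infinite (zset f \<inter> line_set a b c)" by (simp add: Int_absorb1)
  then show False using beyond_conic_Int_line_finite[OF assms(1) \<open>(a, b) \<noteq> (0, 0)\<close>] by blast
qed

lemma beyond_conic_Int_finite:
  assumes "beyond_conic f" "g \<noteq> 0" "tdeg g \<le> 2"
  shows "finite (zset f \<inter> zset g)"
  using assms(1) beyond_conic_not_dvd[OF assms] unfolding beyond_conic_def
  by (blast intro: finite_common_zeros)

section \<open>Counting points on lines\<close>

lemma line_set_eq_range:
  fixes a b c :: real
  assumes "(a, b) \<noteq> (0, 0)"
  obtains x0 y0 where "line_set a b c = range (\<lambda>l. (x0 + l * b, y0 - l * a))"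
proof -
  define n where "n = a\<^sup>2 + b\<^sup>2"
  have n0: "n \<noteq> 0" using assms unfolding n_def by (auto simp: sum_power2_eq_zero_iff)
  define x0 y0 where "x0 = - a * c / n" and "y0 = - b * c / n"
  have x0n: "x0 * n = - a * c" and y0n: "y0 * n = - b * c"
    unfolding x0_def y0_def using n0 by simp_all
  have "line_set a b c = range (\<lambda>l. (x0 + l * b, y0 - l * a))"
  proof (intro set_eqI iffI)
    fix p assume "p \<in> line_set a b c"
    then obtain x y where p: "p = (x, y)" and lin: "c = - a * x - b * y"
      unfolding line_set_def by (cases p) (auto simp: algebra_simps)
    define l where "l = (b * x - a * y) / n"
    have ln: "l * n = b * x - a * y" unfolding l_def using n0 by simp
    have "(x0 + l * b) * n = x0 * n + (l * n) * b" by (simp add: algebra_simps)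
    also have "\<dots> = - a * c + (b * x - a * y) * b" by (simp only: x0n ln)
    also have "\<dots> = x * n" unfolding lin n_def by (simp add: power2_eq_square algebra_simps)
    finally have "x0 + l * b = x" using n0 by simp
    have "(y0 - l * a) * n = y0 * n - (l * n) * a" by (simp add: algebra_simps)
    also have "\<dots> = - b * c - (b * x - a * y) * a" by (simp only: y0n ln)
    also have "\<dots> = y * n" unfolding lin n_def by (simp add: power2_eq_square algebra_simps)
    finally have "y0 - l * a = y" using n0 by simp
    with \<open>x0 + l * b = x\<close> show "p \<in> range (\<lambda>l. (x0 + l * b, y0 - l * a))"
      unfolding p by (intro range_eqI[where x = l]) simp
  next
    fix p assume "p \<in> range (\<lambda>l. (x0 + l * b, y0 - l * a))"
    then obtain l where p: "p = (x0 + l * b, y0 - l * a)" by blast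
    have "(a * x0 + b * y0 + c) * n = a * (x0 * n) + b * (y0 * n) + c * n" by (simp add: algebra_simps)
    also have "\<dots> = a * (- a * c) + b * (- b * c) + c * n" by (simp only: x0n y0n)
    also have "\<dots> = 0" unfolding n_def by (simp add: power2_eq_square algebra_simps)
    finally have "a * x0 + b * y0 + c = 0" using n0 by simp
    then show "p \<in> line_set a b c"
      unfolding line_set_def p by (simp add: algebra_simps)
  qed
  then show ?thesis by (rule that)
qed

lemma infinite_range_line_param:
  fixes a b :: real
  assumes "(a, b) \<noteq> (0, 0)"
  shows "infinite (range (\<lambda>l. (x0 + l * b, y0 - l * a)))"
proof -
  have "inj (\<lambda>l. (x0 + l * b, y0 - l * a))"
  proof (rule injI)
    fix l1 l2 assume "(x0 + l1 * b, y0 - l1 * a) = (x0 + l2 * b, y0 - l2 * a)"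
    then have "l1 * b = l2 * b" "l1 * a = l2 * a" by auto
    then show "l1 = l2" using assms by auto
  qed
  then show ?thesis using finite_imageD infinite_UNIV_char_0 by blast
qed

lemma finite_card_range_zeros:
  fixes r :: "real poly"
  assumes "r \<noteq> 0" "\<And>l. F (P l) = poly r l"
  shows "finite {p \<in> range P. F p = 0}" "card {p \<in> range P. F p = 0} \<le> degree r"
proof -
  have eq: "{p \<in> range P. F p = 0} = P ` {l. poly r l = 0}" using assms(2) by auto
  show "finite {p \<in> range P. F p = 0}" unfolding eq using poly_roots_finite[OF assms(1)] by simp
  have "card (P ` {l. poly r l = 0}) \<le> card {l. poly r l = 0}"
    by (rule card_image_le) (rule poly_roots_finite[OF assms(1)])
  also have "\<dots> \<le> degree r" by (rule card_poly_roots_bound[OF assms(1)])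
  finally show "card {p \<in> range P. F p = 0} \<le> degree r" unfolding eq .
qed

lemma card_beyond_conic_Int_line:
  assumes "beyond_conic f" "(a, b) \<noteq> (0, 0)"
  shows "card (zset f \<inter> line_set a b c) \<le> tdeg f"
proof -
  obtain x0 y0 where L: "line_set a b c = range (\<lambda>l. (x0 + l * b, y0 - l * a))"
    using line_set_eq_range[OF assms(2)] by blast
  define P where "P = (\<lambda>l. (x0 + l * b, y0 - l * a))"
  have "pencil_expansion x0 y0 [:b:] [:- a:] (tdeg f) (eval2 f)"
    by (rule pencil_expansion_eval2) auto
  then obtain h where h: "\<And>l m. eval2 f (x0 + l * poly [:b:] m) (y0 + l * poly [:- a:] m) =
      (\<Sum>j\<le>tdeg f. poly (h j) m * l ^ j)"
    by (rule pencil_expansionE) blast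
  define r where "r = (\<Sum>j\<le>tdeg f. monom (poly (h j) 0) j)"
  have r: "eval2 f (fst (P l)) (snd (P l)) = poly r l" for l
    using h[of l 0] unfolding r_def P_def by (simp add: poly_sum poly_monom)
  have "degree r \<le> tdeg f"
    unfolding r_def by (rule degree_sum_le) (auto intro: order_trans[OF degree_monom_le])
  moreover have "r \<noteq> 0"
  proof
    assume "r = 0"
    then have "line_set a b c \<subseteq> zset f" using r unfolding L P_def zset_def by auto
    then have "zset f \<inter> line_set a b c = range P" unfolding L P_def by blast
    then show False
      using beyond_conic_Int_line_finite[OF assms, of c] infinite_range_line_param[OF assms(2)]
      unfolding P_def by simp
  qed
  then have "card {p \<in> range P. eval2 f (fst p) (snd p) = 0} \<le> degree r"
    by (rule finite_card_range_zeros(2)) (rule r)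
  moreover have "zset f \<inter> line_set a b c = {p \<in> range P. eval2 f (fst p) (snd p) = 0}"
    unfolding L P_def zset_def by auto
  ultimately show ?thesis by simp
qed

lemma card_beyond_conic_Int_affine:
  assumes "beyond_conic f" "h \<noteq> 0" "tdeg h \<le> 1"
  shows "finite (zset f \<inter> zset h)" "card (zset f \<inter> zset h) \<le> tdeg f"
proof -
  obtain a b c where h: "h = affine_bipoly a b c" using tdeg_le_1_affine[OF assms(3)] by (rule that)
  show "finite (zset f \<inter> zset h)" using beyond_conic_Int_finite assms by simp
  show "card (zset f \<inter> zset h) \<le> tdeg f"
  proof (cases "(a, b) = (0, 0)")
    case True
    then have "zset h = {}" using h assms(2) by (auto simp: zset_def affine_bipoly_def)
    then show ?thesis by simp
  next
    case False
    then show ?thesis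
      using card_beyond_conic_Int_line[OF assms(1) False] by (simp add: h zset_affine_bipoly)
  qed
qed

lemma card_line_Int_circle:
  fixes a b c u v R :: real
  assumes "(a, b) \<noteq> (0, 0)"
  shows "finite {p \<in> line_set a b c. (fst p - u)\<^sup>2 + (snd p - v)\<^sup>2 = R}"
    "card {p \<in> line_set a b c. (fst p - u)\<^sup>2 + (snd p - v)\<^sup>2 = R} \<le> 2"
proof -
  obtain x0 y0 where L: "line_set a b c = range (\<lambda>l. (x0 + l * b, y0 - l * a))"
    using line_set_eq_range[OF assms] by blast
  define P where "P = (\<lambda>l. (x0 + l * b, y0 - l * a))"
  define r where
    "r = [:(x0 - u)\<^sup>2 + (y0 - v)\<^sup>2 - R, 2 * (b * (x0 - u) - a * (y0 - v)), a\<^sup>2 + b\<^sup>2:]"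
  have r0: "r \<noteq> 0" using assms unfolding r_def by (auto simp: sum_power2_eq_zero_iff)
  have rP: "(fst (P l) - u)\<^sup>2 + (snd (P l) - v)\<^sup>2 - R = poly r l" for l
    unfolding r_def P_def by (simp add: power2_eq_square algebra_simps)
  note finite_card_range_zeros[where F = "\<lambda>p. (fst p - u)\<^sup>2 + (snd p - v)\<^sup>2 - R" and P = P,
      OF r0 rP]
  moreover have "degree r \<le> 2" unfolding r_def by (simp add: degree_pCons_le)
  ultimately show "finite {p \<in> line_set a b c. (fst p - u)\<^sup>2 + (snd p - v)\<^sup>2 = R}"
    "card {p \<in> line_set a b c. (fst p - u)\<^sup>2 + (snd p - v)\<^sup>2 = R} \<le> 2"
    unfolding L P_def by simp_all
qed

section \<open>A Bezout bound for conics\<close>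

lemma pencil_expansion_through_base:
  assumes "degree a \<le> 1" "degree b \<le> 1" "tdeg f \<le> d" "eval2 f x0 y0 = 0"
  obtains h where "\<And>j. degree (h j) \<le> j" "h 0 = 0"
    "\<And>l m. eval2 f (x0 + l * poly a m) (y0 + l * poly b m) = (\<Sum>j\<le>d. poly (h j) m * l ^ j)"
proof -
  have "pencil_expansion x0 y0 a b d (eval2 f)"
    using pencil_expansion_mono[OF pencil_expansion_eval2[OF assms(1,2)] assms(3)] .
  then obtain h where h: "\<And>j. degree (h j) \<le> j"
    "\<And>l m. eval2 f (x0 + l * poly a m) (y0 + l * poly b m) = (\<Sum>j\<le>d. poly (h j) m * l ^ j)"
    by (rule pencil_expansionE) blast
  have "poly (h 0) m = 0" for m
    using h(2)[of 0 m] assms(4) by (simp add: zero_power)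
  then have "h 0 = 0" using poly_all_0_iff_0 by blast
  with h show ?thesis by (intro that)
qed

lemma pencil_coordinates:
  fixes c dx dy :: real
  assumes "dx + c * dy \<noteq> 0"
  defines "m \<equiv> (dy - c * dx) / (dx + c * dy)" and "l \<equiv> (dx + c * dy) / (1 + c\<^sup>2)"
  shows "l * (1 - c * m) = dx" "l * (c + m) = dy" "l \<noteq> 0"
proof -
  have n: "1 + c\<^sup>2 \<noteq> 0" using zero_le_power2[of c] by linarith
  have m': "m * (dx + c * dy) = dy - c * dx" unfolding m_def using assms(1) by simp
  have l': "l * (1 + c\<^sup>2) = dx + c * dy" unfolding l_def using n by simp
  have "(l * (1 - c * m)) * (1 + c\<^sup>2) = (l * (1 + c\<^sup>2)) * (1 - c * m)" by (simp add: algebra_simps)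
  also have "\<dots> = (dx + c * dy) - c * (m * (dx + c * dy))" unfolding l' by (simp add: algebra_simps)
  also have "\<dots> = dx * (1 + c\<^sup>2)" unfolding m' by (simp add: power2_eq_square algebra_simps)
  finally show "l * (1 - c * m) = dx" using n by simp
  have "(l * (c + m)) * (1 + c\<^sup>2) = (l * (1 + c\<^sup>2)) * (c + m)" by (simp add: algebra_simps)
  also have "\<dots> = c * (dx + c * dy) + m * (dx + c * dy)" unfolding l' by (simp add: algebra_simps)
  also have "\<dots> = dy * (1 + c\<^sup>2)" unfolding m' by (simp add: power2_eq_square algebra_simps)
  finally show "l * (c + m) = dy" using n by simp
  show "l \<noteq> 0" using assms(1) n unfolding l_def by simp
qed

lemma pencil_slope_unique:
  fixes c l l' m m' :: real
  assumes "l \<noteq> 0" "l * (1 - c * m) = l' * (1 - c * m')" "l * (c + m) = l' * (c + m')"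
  shows "m = m'"
proof -
  have n: "1 + c\<^sup>2 \<noteq> 0" using zero_le_power2[of c] by linarith
  have "l * (1 - c * m) * (c + m') = l * (c + m) * (1 - c * m')"
    using assms(2,3) by (metis mult.commute mult.left_commute)
  then have "l * ((1 + c\<^sup>2) * (m' - m)) = 0" by (simp add: power2_eq_square algebra_simps)
  then show ?thesis using assms(1) n by simp
qed

lemma exists_slope_avoiding:
  fixes Z :: "(real \<times> real) set"
  assumes "finite Z"
  obtains c where "\<And>x y. (x, y) \<in> Z \<Longrightarrow> (x, y) \<noteq> (x0, y0) \<Longrightarrow> (x - x0) + c * (y - y0) \<noteq> 0"
proof -
  obtain c where c: "c \<notin> (\<lambda>p. - (fst p - x0) / (snd p - y0)) ` Z"
    using ex_new_if_finite[OF infinite_UNIV_char_0] assms by blast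
  have "(x - x0) + c * (y - y0) \<noteq> 0" if "(x, y) \<in> Z" "(x, y) \<noteq> (x0, y0)" for x y
  proof
    assume h: "(x - x0) + c * (y - y0) = 0"
    then have "y \<noteq> y0" using that(2) by auto
    with h have "c = - (x - x0) / (y - y0)" by (simp add: field_simps)
    then show False using c that(1) by force
  qed
  then show ?thesis by (rule that)
qed

text \<open>\<open>conic_pullback k\<^sub>1 k\<^sub>2 h D\<close> at \<open>m\<close> is \<open>k\<^sub>2(m)\<^sup>D\<close> times the value of \<open>f\<close> at the point
  \<open>l = -k\<^sub>1(m)/k\<^sub>2(m)\<close> of the pencil line of slope \<open>m\<close>, where \<open>\<Sum>\<^sub>j h\<^sub>j(m) l\<^sup>j\<close> expands \<open>f\<close> along
  the pencil and \<open>k\<^sub>1(m) l + k\<^sub>2(m) l\<^sup>2\<close> expands the conic, so that the point is the second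
  intersection of that line with the conic.\<close>

definition conic_pullback :: "real poly \<Rightarrow> real poly \<Rightarrow> (nat \<Rightarrow> real poly) \<Rightarrow> nat \<Rightarrow> real poly" where
  "conic_pullback k1 k2 h D = (\<Sum>j\<le>D. k2 ^ (D - j) * (- k1) ^ j * h j)"

lemma poly_conic_pullback:
  assumes "poly k2 m \<noteq> 0"
  shows "poly (conic_pullback k1 k2 h D) m =
         poly k2 m ^ D * (\<Sum>j\<le>D. poly (h j) m * (- poly k1 m / poly k2 m) ^ j)"
proof -
  have summand: "poly k2 m ^ (D - j) * (- poly k1 m) ^ j * poly (h j) m =
        poly k2 m ^ D * (poly (h j) m * (- poly k1 m / poly k2 m) ^ j)" if "j \<le> D" for j
  proof -
    have "poly k2 m ^ D = poly k2 m ^ (D - j) * poly k2 m ^ j"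
      using that by (simp add: power_add[symmetric])
    moreover have "(- poly k1 m / poly k2 m) ^ j * poly k2 m ^ j = (- poly k1 m) ^ j"
      using assms by (simp add: power_mult_distrib[symmetric])
    ultimately show ?thesis by (metis (no_types, lifting) mult.assoc mult.commute)
  qed
  have "poly (conic_pullback k1 k2 h D) m =
        (\<Sum>j\<le>D. poly k2 m ^ (D - j) * (- poly k1 m) ^ j * poly (h j) m)"
    unfolding conic_pullback_def by (simp add: poly_sum)
  also have "\<dots> = (\<Sum>j\<le>D. poly k2 m ^ D * (poly (h j) m * (- poly k1 m / poly k2 m) ^ j))"
    by (rule sum.cong[OF refl]) (rule summand, simp)
  finally show ?thesis by (simp only: sum_distrib_left)
qed

lemma degree_conic_pullback_term:
  fixes k1 k2 h :: "real poly"
  assumes "degree k1 \<le> e" "degree k2 \<le> 2" "degree h \<le> j"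
  shows "degree (k2 ^ (D - j) * (- k1) ^ j * h) \<le> (D - j) * 2 + j * e + j"
proof -
  have "degree (k2 ^ (D - j)) \<le> degree k2 * (D - j)" by (rule degree_power_le)
  also have "\<dots> \<le> (D - j) * 2" using assms(2) by simp
  finally have k2: "degree (k2 ^ (D - j)) \<le> (D - j) * 2" .
  have "degree ((- k1) ^ j) \<le> degree k1 * j" using degree_power_le[of "- k1" j] by simp
  also have "\<dots> \<le> j * e" using assms(1) by (simp add: mult.commute)
  finally have k1: "degree ((- k1) ^ j) \<le> j * e" .
  have "degree (k2 ^ (D - j) * (- k1) ^ j * h) \<le>
        degree (k2 ^ (D - j)) + degree ((- k1) ^ j) + degree h"
    by (meson add_le_mono degree_mult_le le_refl order_trans)
  then show ?thesis using k1 k2 assms(3) by linarith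
qed

lemma card_conic_pullback_roots:
  fixes k1 k2 :: "real poly" and h :: "nat \<Rightarrow> real poly"
  assumes deg: "degree k1 \<le> 1" "degree k2 \<le> 2" "\<And>j. degree (h j) \<le> j" and h0: "h 0 = 0"
    and nz: "conic_pullback k1 k2 h D \<noteq> 0"
    and M: "M \<subseteq> {m. poly (conic_pullback k1 k2 h D) m = 0}" "\<forall>m\<in>M. poly k1 m \<noteq> 0"
  shows "card M \<le> 2 * D - 1"
proof -
  let ?pp = "conic_pullback k1 k2 h D"
  let ?R = "{m. poly ?pp m = 0}"
  have finR: "finite ?R" using poly_roots_finite[OF nz] .
  have cardR: "card ?R \<le> degree ?pp" by (rule card_poly_roots_bound[OF nz])
  show ?thesis
  proof (cases "coeff k1 1 = 0")
    case False
    text \<open>The root of \<open>k\<^sub>1\<close> is a root of the pullback, as \<open>h\<^sub>0 = 0\<close>, but lies outside \<open>M\<close>.\<close>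
    define mt where "mt = - coeff k1 0 / coeff k1 1"
    have "poly k1 mt = coeff k1 0 + coeff k1 1 * mt"
      using poly_eq_sum_upto[OF deg(1)] by simp
    then have k1mt: "poly k1 mt = 0" unfolding mt_def using False by simp
    have "poly ?pp mt = (\<Sum>j\<le>D. poly k2 mt ^ (D - j) * (- poly k1 mt) ^ j * poly (h j) mt)"
      unfolding conic_pullback_def by (simp add: poly_sum)
    also have "\<dots> = 0"
    proof (rule sum.neutral, intro ballI)
      fix j show "poly k2 mt ^ (D - j) * (- poly k1 mt) ^ j * poly (h j) mt = 0"
        using k1mt h0 by (cases j) simp_all
    qed
    finally have "insert mt M \<subseteq> ?R" using M(1) by simp
    then have "card (insert mt M) \<le> card ?R" by (rule card_mono[OF finR])
    moreover have "mt \<notin> M" using M(2) k1mt by blast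
    then have "card (insert mt M) = card M + 1" using finite_subset[OF M(1) finR] by simp
    moreover have "degree ?pp \<le> 2 * D"
      unfolding conic_pullback_def
    proof (rule degree_sum_le)
      fix j assume "j \<in> {..D}"
      then have "(D - j) * 2 + j * 1 + j \<le> 2 * D" by simp
      then show "degree (k2 ^ (D - j) * (- k1) ^ j * h j) \<le> 2 * D"
        using degree_conic_pullback_term[OF deg(1,2,3), of D j] by linarith
    qed simp
    ultimately show ?thesis using cardR by linarith
  next
    case True
    have k1: "degree k1 \<le> 0"
    proof (rule degree_le, intro allI impI)
      fix i :: nat assume "0 < i"
      then show "coeff k1 i = 0" using True deg(1) by (cases "i = 1") (auto intro: coeff_eq_0)
    qed
    have "degree ?pp \<le> 2 * D - 1"
      unfolding conic_pullback_def
    proof (rule degree_sum_le)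
      fix j assume j: "j \<in> {..D}"
      show "degree (k2 ^ (D - j) * (- k1) ^ j * h j) \<le> 2 * D - 1"
      proof (cases "j = 0")
        case False
        then have "(D - j) * 2 + j * 0 + j \<le> 2 * D - 1" using j by simp
        then show ?thesis using degree_conic_pullback_term[OF k1 deg(2,3), of D j] by linarith
      qed (simp add: h0)
    qed simp
    moreover have "card M \<le> card ?R" by (rule card_mono[OF finR M(1)])
    ultimately show ?thesis using cardR by linarith
  qed
qed

lemma card_beyond_conic_Int_conic_containing_line:
  assumes "beyond_conic f" "g \<noteq> 0" "tdeg g \<le> 2"
    and "(v1, v2) \<noteq> (0, 0)" and "\<And>l. eval2 g (x0 + l * v1) (y0 + l * v2) = 0"
  shows "card (zset f \<inter> zset g) \<le> 2 * tdeg f"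
proof -
  define L where "L = affine_bipoly v2 (- v1) (v1 * y0 - v2 * x0)"
  have t1: "tdeg L = 1" unfolding L_def using tdeg_affine_bipoly assms(4) by auto
  have "(- v2, v1) \<noteq> (0, 0)" using assms(4) by auto
  then have "infinite (range (\<lambda>l. (x0 + l * v1, y0 + l * v2)))"
    using infinite_range_line_param[of "- v2" v1 x0 y0] by simp
  moreover have "range (\<lambda>l. (x0 + l * v1, y0 + l * v2)) \<subseteq> zset L \<inter> zset g"
    unfolding L_def zset_def using assms(5) by (auto simp: algebra_simps)
  ultimately have "infinite (zset L \<inter> zset g)" using finite_subset by blast
  then have "L dvd g" using finite_common_zeros[OF tdeg_1_irreducible[OF t1]] by blast
  then obtain q where q: "g = L * q" by (auto elim: dvdE)
  have "q \<noteq> 0" "L \<noteq> 0" using q assms(2) by auto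
  then have "tdeg q \<le> 1" using tdeg_mult[of L q] q t1 assms(3) by simp
  have "zset f \<inter> zset g = (zset f \<inter> zset L) \<union> (zset f \<inter> zset q)"
    unfolding q zset_def by auto
  moreover note card_beyond_conic_Int_affine[OF assms(1) \<open>L \<noteq> 0\<close>]
    card_beyond_conic_Int_affine[OF assms(1) \<open>q \<noteq> 0\<close> \<open>tdeg q \<le> 1\<close>]
  ultimately show ?thesis using t1 card_Un_le[of "zset f \<inter> zset L" "zset f \<inter> zset q"] by simp
qed

text \<open>Below, \<open>(x\<^sub>0, y\<^sub>0)\<close> is a common zero of \<open>f\<close> and the conic \<open>g\<close>, and the line of slope \<open>m\<close> in
  the pencil through it is \<open>l \<mapsto> (x\<^sub>0 + l (1 - c m), y\<^sub>0 + l (c + m))\<close>. The parameter \<open>c\<close> rotates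
  the pencil so that its one missing line contains no other common zero.\<close>

context
  fixes f g :: bipoly and x0 y0 c :: real and h k :: "nat \<Rightarrow> real poly"
  assumes f_pencil: "\<And>l m. eval2 f (x0 + l * (1 - c * m)) (y0 + l * (c + m)) =
      (\<Sum>j\<le>tdeg f. poly (h j) m * l ^ j)"
    and g_pencil: "\<And>l m. eval2 g (x0 + l * (1 - c * m)) (y0 + l * (c + m)) =
      poly (k 1) m * l + poly (k 2) m * l\<^sup>2"
begin

lemma conic_second_point:
  assumes "poly (k 2) m \<noteq> 0"
  defines "l \<equiv> - poly (k 1) m / poly (k 2) m"
  shows "eval2 g (x0 + l * (1 - c * m)) (y0 + l * (c + m)) = 0"
    and "poly (conic_pullback (k 1) (k 2) h (tdeg f)) m =
      poly (k 2) m ^ tdeg f * eval2 f (x0 + l * (1 - c * m)) (y0 + l * (c + m))"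
proof -
  have "poly (k 2) m * l = - poly (k 1) m" unfolding l_def using assms(1) by simp
  then show "eval2 g (x0 + l * (1 - c * m)) (y0 + l * (c + m)) = 0"
    unfolding g_pencil by (simp add: power2_eq_square algebra_simps)
  show "poly (conic_pullback (k 1) (k 2) h (tdeg f)) m =
      poly (k 2) m ^ tdeg f * eval2 f (x0 + l * (1 - c * m)) (y0 + l * (c + m))"
    unfolding f_pencil l_def poly_conic_pullback[OF assms(1)] ..
qed

lemma conic_pullback_nonzero:
  assumes "finite (zset f \<inter> zset g)" "k 1 \<noteq> 0" "k 2 \<noteq> 0"
  shows "conic_pullback (k 1) (k 2) h (tdeg f) \<noteq> 0"
proof
  assume pp0: "conic_pullback (k 1) (k 2) h (tdeg f) = 0"
  define S where "S = - {m. poly (k 1 * k 2) m = 0}"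
  define lam where "lam = (\<lambda>m. - poly (k 1) m / poly (k 2) m)"
  define P where "P = (\<lambda>m. (x0 + lam m * (1 - c * m), y0 + lam m * (c + m)))"
  have "finite {m. poly (k 1 * k 2) m = 0}" by (rule poly_roots_finite) (use assms in simp)
  then have "infinite S"
    unfolding S_def Compl_eq_Diff_UNIV by (rule Diff_infinite_finite[OF _ infinite_UNIV_char_0])
  moreover have "inj_on P S"
  proof (rule inj_onI)
    fix m m' assume "m \<in> S" "P m = P m'"
    then have "lam m \<noteq> 0" "lam m * (1 - c * m) = lam m' * (1 - c * m')"
        "lam m * (c + m) = lam m' * (c + m')"
      unfolding S_def P_def lam_def by auto
    then show "m = m'" by (rule pencil_slope_unique)
  qed
  moreover have "P ` S \<subseteq> zset f \<inter> zset g"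
  proof
    fix p assume "p \<in> P ` S"
    then obtain m where m: "m \<in> S" "p = P m" by blast
    then have k2: "poly (k 2) m \<noteq> 0" unfolding S_def by simp
    show "p \<in> zset f \<inter> zset g"
      using conic_second_point[OF k2] pp0 k2 unfolding m(2) P_def lam_def zset_def by simp
  qed
  ultimately show False using assms(1) finite_imageD finite_subset by blast
qed

lemma common_zero_on_pencil:
  fixes x y :: real
  defines "m \<equiv> ((y - y0) - c * (x - x0)) / ((x - x0) + c * (y - y0))"
  assumes "(x, y) \<in> zset f \<inter> zset g" "(x - x0) + c * (y - y0) \<noteq> 0"
    and "poly (k 1) m \<noteq> 0 \<or> poly (k 2) m \<noteq> 0"
  shows "poly (k 1) m \<noteq> 0" "poly (k 2) m \<noteq> 0"
    "poly (conic_pullback (k 1) (k 2) h (tdeg f)) m = 0"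
    "(x, y) = (let l = - poly (k 1) m / poly (k 2) m in (x0 + l * (1 - c * m), y0 + l * (c + m)))"
proof -
  define l where "l = ((x - x0) + c * (y - y0)) / (1 + c\<^sup>2)"
  note pc = pencil_coordinates[OF assms(3), folded m_def l_def]
  then have xy: "x0 + l * (1 - c * m) = x" "y0 + l * (c + m) = y" by simp_all
  have "l * (poly (k 1) m + poly (k 2) m * l) = 0"
    using g_pencil[of l m] assms(2) unfolding xy by (simp add: zset_def power2_eq_square algebra_simps)
  then have line: "poly (k 1) m + poly (k 2) m * l = 0" using pc(3) by simp
  then show k2: "poly (k 2) m \<noteq> 0" using assms(4) by auto
  with line show "poly (k 1) m \<noteq> 0" using pc(3) by auto
  from line k2 have l: "l = - poly (k 1) m / poly (k 2) m" by (simp add: field_simps)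
  then show "(x, y) = (let l = - poly (k 1) m / poly (k 2) m in (x0 + l * (1 - c * m), y0 + l * (c + m)))"
    using xy by simp
  show "poly (conic_pullback (k 1) (k 2) h (tdeg f)) m = 0"
    using conic_second_point(2)[OF k2] assms(2) unfolding l[symmetric] xy by (simp add: zset_def)
qed


lemma card_common_zeros_pencil:
  assumes finZ: "finite (zset f \<inter> zset g)" and p0: "(x0, y0) \<in> zset f \<inter> zset g"
    and c: "\<And>x y. (x, y) \<in> zset f \<inter> zset g \<Longrightarrow> (x, y) \<noteq> (x0, y0) \<Longrightarrow>
      (x - x0) + c * (y - y0) \<noteq> 0"
    and no_line: "\<not> (\<exists>m. poly (k 1) m = 0 \<and> poly (k 2) m = 0)"
    and deg: "\<And>j. degree (h j) \<le> j" "h 0 = 0" "degree (k 1) \<le> 1" "degree (k 2) \<le> 2"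
    and "1 \<le> tdeg f"
  shows "card (zset f \<inter> zset g) \<le> 2 * tdeg f"
proof -
  define Z where "Z = zset f \<inter> zset g"
  define slope where "slope = (\<lambda>(x, y). ((y - y0) - c * (x - x0)) / ((x - x0) + c * (y - y0)))"
  define Q where "Q = (\<lambda>m. let l = - poly (k 1) m / poly (k 2) m in
    (x0 + l * (1 - c * m), y0 + l * (c + m)))"
  let ?Z' = "Z - {(x0, y0)}"
  have on_pencil: "poly (k 1) (slope p) \<noteq> 0 \<and> poly (k 2) (slope p) \<noteq> 0 \<and>
      poly (conic_pullback (k 1) (k 2) h (tdeg f)) (slope p) = 0 \<and> p = Q (slope p)"
    if p: "p \<in> ?Z'" for p
  proof -
    obtain x y where xy: "p = (x, y)" by (cases p)
    have sl: "slope (x, y) = ((y - y0) - c * (x - x0)) / ((x - x0) + c * (y - y0))"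
      unfolding slope_def by simp
    have "(x, y) \<in> zset f \<inter> zset g" "(x - x0) + c * (y - y0) \<noteq> 0"
      using p c[of x y] unfolding xy Z_def by auto
    moreover have "poly (k 1) (slope p) \<noteq> 0 \<or> poly (k 2) (slope p) \<noteq> 0" using no_line by auto
    ultimately show ?thesis
      unfolding sl xy Q_def using common_zero_on_pencil by blast
  qed
  have "inj_on slope ?Z'"
  proof (rule inj_onI)
    fix p q assume "p \<in> ?Z'" "q \<in> ?Z'" "slope p = slope q"
    then have "p = Q (slope p)" "q = Q (slope q)" "slope p = slope q" using on_pencil by blast+
    then show "p = q" by simp
  qed
  then have "card (slope ` ?Z') = card ?Z'" by (rule card_image)
  also have "\<dots> = card Z - 1" using p0 unfolding Z_def by (simp add: card_Diff_singleton)
  finally have card: "card (slope ` ?Z') = card Z - 1" .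
  show ?thesis
  proof (cases "?Z' = {}")
    case True
    then have "Z = {(x0, y0)}" using p0 unfolding Z_def by blast
    then show ?thesis using \<open>1 \<le> tdeg f\<close> by (simp add: Z_def[symmetric])
  next
    case False
    then obtain p where "p \<in> ?Z'" by blast
    then have "poly (k 1) (slope p) \<noteq> 0" "poly (k 2) (slope p) \<noteq> 0"
      using on_pencil by blast+
    then have "k 1 \<noteq> 0" "k 2 \<noteq> 0" by auto
    then have "conic_pullback (k 1) (k 2) h (tdeg f) \<noteq> 0"
      using conic_pullback_nonzero finZ by blast
    moreover have "slope ` ?Z' \<subseteq> {m. poly (conic_pullback (k 1) (k 2) h (tdeg f)) m = 0}"
      "\<forall>m\<in>slope ` ?Z'. poly (k 1) m \<noteq> 0"
      using on_pencil by blast+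
    ultimately have "card (slope ` ?Z') \<le> 2 * tdeg f - 1"
      using card_conic_pullback_roots[OF deg(3,4,1,2)] by simp
    moreover have "0 < card Z" using finZ p0 card_gt_0_iff unfolding Z_def by blast
    ultimately show ?thesis using card \<open>1 \<le> tdeg f\<close> unfolding Z_def by linarith
  qed
qed

end

lemma card_beyond_conic_Int_conic:
  assumes f: "beyond_conic f" and g: "g \<noteq> 0" "tdeg g \<le> 2"
  shows "card (zset f \<inter> zset g) \<le> 2 * tdeg f"
proof -
  define Z where "Z = zset f \<inter> zset g"
  have finZ: "finite Z" unfolding Z_def using beyond_conic_Int_finite[OF f g] .
  show ?thesis
  proof (cases "Z = {}")
    case False
    then obtain x0 y0 where p0: "(x0, y0) \<in> Z" by auto
    obtain c where c: "\<And>x y. (x, y) \<in> Z \<Longrightarrow> (x, y) \<noteq> (x0, y0) \<Longrightarrow> (x - x0) + c * (y - y0) \<noteq> 0"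
      using exists_slope_avoiding[OF finZ] by blast
    have dir: "poly [:1, - c:] m = 1 - c * m" "poly [:c, 1:] m = c + m" for m
      by (simp_all add: algebra_simps)
    obtain h where h: "\<And>j. degree (h j) \<le> j" "h 0 = 0"
      "\<And>l m. eval2 f (x0 + l * poly [:1, - c:] m) (y0 + l * poly [:c, 1:] m) =
        (\<Sum>j\<le>tdeg f. poly (h j) m * l ^ j)"
      by (rule pencil_expansion_through_base[of "[:1, - c:]" "[:c, 1:]" f "tdeg f" x0 y0])
        (use p0 in \<open>auto simp: Z_def zset_def\<close>)
    obtain k where k: "\<And>j. degree (k j) \<le> j" "k 0 = 0"
      "\<And>l m. eval2 g (x0 + l * poly [:1, - c:] m) (y0 + l * poly [:c, 1:] m) =
        (\<Sum>j\<le>2. poly (k j) m * l ^ j)"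
      by (rule pencil_expansion_through_base[of "[:1, - c:]" "[:c, 1:]" g 2 x0 y0])
        (use p0 g in \<open>auto simp: Z_def zset_def\<close>)
    note f_pencil = h(3)[unfolded dir]
    have g_pencil: "eval2 g (x0 + l * (1 - c * m)) (y0 + l * (c + m)) =
        poly (k 1) m * l + poly (k 2) m * l\<^sup>2" for l m
      using k(3)[of l m] k(2) unfolding dir by (simp add: numeral_2_eq_2)
    show ?thesis
    proof (cases "\<exists>m. poly (k 1) m = 0 \<and> poly (k 2) m = 0")
      case True
      then obtain m where "poly (k 1) m = 0" "poly (k 2) m = 0" by blast
      then have "eval2 g (x0 + l * (1 - c * m)) (y0 + l * (c + m)) = 0" for l
        using g_pencil by simp
      moreover have "(1 - c * m, c + m) \<noteq> (0, 0)"
      proof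
        assume "(1 - c * m, c + m) = (0, 0)"
        then have "m = - c" "1 - c * m = 0" by auto
        then have "1 + c\<^sup>2 = 0" by (simp add: power2_eq_square)
        then show False using zero_le_power2[of c] by linarith
      qed
      ultimately show ?thesis
        using card_beyond_conic_Int_conic_containing_line[OF f g] by blast
    next
      case False
      have "1 \<le> tdeg f" using two_le_tdeg_beyond_conic[OF f] by simp
      with finZ p0 c False h(1,2) k(1)[of 1] k(1)[of 2] show ?thesis
        unfolding Z_def by (rule card_common_zeros_pencil[OF f_pencil g_pencil])
    qed
  qed (simp add: Z_def)
qed

lemma card_beyond_conic_zeros_quadratic:
  assumes "beyond_conic f" "bipoly_fun 2 G" "G a b \<noteq> 0"
  shows "finite {(x, y) \<in> zset f. G x y = 0}" "card {(x, y) \<in> zset f. G x y = 0} \<le> 2 * tdeg f"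
proof -
  obtain g where g: "tdeg g \<le> 2" "\<And>x y. eval2 g x y = G x y"
    using assms(2) unfolding bipoly_fun_def by blast
  then have "g \<noteq> 0" using assms(3) by auto
  moreover have "{(x, y) \<in> zset f. G x y = 0} = zset f \<inter> zset g"
    unfolding zset_def using g(2) by auto
  ultimately show "finite {(x, y) \<in> zset f. G x y = 0}" "card {(x, y) \<in> zset f. G x y = 0} \<le> 2 * tdeg f"
    using beyond_conic_Int_finite[OF assms(1) _ g(1)] card_beyond_conic_Int_conic[OF assms(1) _ g(1)]
    by simp_all
qed

section \<open>Triple intersections of the sets \<open>C\<^sub>i\<^sub>j\<close>\<close>

lemma dist_neq_imp_sq_neq:
  fixes a1 a2 b1 b2 c1 c2 d1 d2 :: real
  assumes "dist (a1, a2) (b1, b2) \<noteq> dist (c1, c2) (d1, d2)"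
  shows "(b1 - a1)\<^sup>2 + (b2 - a2)\<^sup>2 \<noteq> (d1 - c1)\<^sup>2 + (d2 - c2)\<^sup>2"
  using assms by (auto simp: dist_Pair_Pair dist_real_def power2_commute)

lemma Cpair_swap: "Cpair f p q = prod.swap ` Cpair f q p"
  unfolding Cpair_def by (auto simp: image_iff)

lemma equal_distances_linear:
  fixes x y x' y' i1 i2 j1 j2 k1 k2 l1 l2 :: real
  assumes "(x - i1)\<^sup>2 + (y - i2)\<^sup>2 = (x' - j1)\<^sup>2 + (y' - j2)\<^sup>2"
    and "(x - k1)\<^sup>2 + (y - k2)\<^sup>2 = (x' - l1)\<^sup>2 + (y' - l2)\<^sup>2"
  shows "(x - i1) * (k1 - i1) + (y - i2) * (k2 - i2) - ((x' - j1) * (l1 - j1) + (y' - j2) * (l2 - j2))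
         = ((k1 - i1)\<^sup>2 + (k2 - i2)\<^sup>2 - ((l1 - j1)\<^sup>2 + (l2 - j2)\<^sup>2)) / 2"
proof -
  have "2 * ((x - i1) * (k1 - i1) + (y - i2) * (k2 - i2) - ((x' - j1) * (l1 - j1) + (y' - j2) * (l2 - j2)))
         = (k1 - i1)\<^sup>2 + (k2 - i2)\<^sup>2 - ((l1 - j1)\<^sup>2 + (l2 - j2)\<^sup>2)"
    using assms by algebra
  then show ?thesis by simp
qed

lemma cramer_2x2:
  fixes X Y b1 b2 g1 g2 R1 R2 :: real
  assumes "X * b1 + Y * b2 = R1" "X * g1 + Y * g2 = R2"
  shows "X * (b1 * g2 - b2 * g1) = R1 * g2 - R2 * b2" "Y * (b1 * g2 - b2 * g1) = b1 * R2 - g1 * R1"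
  unfolding assms[symmetric] by (simp_all add: algebra_simps)

lemma singular_2x2_kernel:
  fixes b1 b2 g1 g2 :: real
  assumes "b1 * g2 - b2 * g1 = 0"
  obtains m1 m2 where "(m1, m2) \<noteq> (0, 0)" "m1 * b1 + m2 * g1 = 0" "m1 * b2 + m2 * g2 = 0"
proof (cases "(g1, b1) = (0, 0)")
  case False
  then show ?thesis using assms by (intro that[of g1 "- b1"]) (auto simp: algebra_simps)
next
  case True
  show ?thesis
  proof (cases "(g2, b2) = (0, 0)")
    case False
    then show ?thesis using True by (intro that[of g2 "- b2"]) (auto simp: algebra_simps)
  next
    case True': True
    show ?thesis using True True' by (intro that[of 1 0]) auto
  qed
qed

text \<open>A combination \<open>m\<close> of the two linear equations whose \<open>(x', y')\<close>-part and \<open>(x, y)\<close>-part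
  both vanish would give \<open>a = t e\<close> and \<open>b = t g\<close> with \<open>t = - m\<^sub>2 / m\<^sub>1\<close>, and its constant part
  would force \<open>t (t - 1) = 0\<close>; each alternative violates a distance hypothesis.\<close>

lemma no_degenerate_combination:
  fixes m1 m2 a1 a2 b1 b2 e1 e2 g1 g2 :: real
  assumes m: "(m1, m2) \<noteq> (0, 0)"
    and hb: "m1 * b1 + m2 * g1 = 0" "m1 * b2 + m2 * g2 = 0"
    and ha: "m1 * a1 + m2 * e1 = 0" "m1 * a2 + m2 * e2 = 0"
    and hc: "m1 * (a1\<^sup>2 + a2\<^sup>2 - (b1\<^sup>2 + b2\<^sup>2)) + m2 * (e1\<^sup>2 + e2\<^sup>2 - (g1\<^sup>2 + g2\<^sup>2)) = 0"
    and c1: "a1\<^sup>2 + a2\<^sup>2 \<noteq> b1\<^sup>2 + b2\<^sup>2" and c2: "e1\<^sup>2 + e2\<^sup>2 \<noteq> g1\<^sup>2 + g2\<^sup>2"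
    and c3: "(a1 - e1)\<^sup>2 + (a2 - e2)\<^sup>2 \<noteq> (b1 - g1)\<^sup>2 + (b2 - g2)\<^sup>2"
  shows False
proof (cases "m1 = 0")
  case True
  then have "m2 \<noteq> 0" using m by auto
  then have "e1 = 0" "e2 = 0" "g1 = 0" "g2 = 0" using True ha hb by auto
  then show False using c2 by simp
next
  case False
  define t where "t = - m2 / m1"
  have a: "a1 = t * e1" "a2 = t * e2" using ha False unfolding t_def by (auto simp: field_simps)
  have b: "b1 = t * g1" "b2 = t * g2" using hb False unfolding t_def by (auto simp: field_simps)
  define E where "E = e1\<^sup>2 + e2\<^sup>2 - (g1\<^sup>2 + g2\<^sup>2)"
  have "E \<noteq> 0" using c2 unfolding E_def by simp
  have "m1 * (t\<^sup>2 * E) + m2 * E = 0" using hc unfolding a b E_def by (simp add: power2_eq_square algebra_simps)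
  then have "m1 * (t\<^sup>2 * E - t * E) = 0" unfolding t_def using False by (simp add: field_simps power2_eq_square)
  then have "t * (t - 1) * E = 0" using False by (simp add: power2_eq_square algebra_simps)
  then have "t = 0 \<or> t = 1" using \<open>E \<noteq> 0\<close> by simp
  then show False using c1 c3 a b by auto
qed

lemma card_triple_Int_regular:
  fixes f :: bipoly and i1 i2 j1 j2 k1 k2 l1 l2 u1 u2 w1 w2 :: real
  assumes f: "beyond_conic f"
    and det: "(l1 - j1) * (w2 - j2) - (l2 - j2) * (w1 - j1) \<noteq> 0"
    and c1: "(k1 - i1)\<^sup>2 + (k2 - i2)\<^sup>2 \<noteq> (l1 - j1)\<^sup>2 + (l2 - j2)\<^sup>2"
  defines "T \<equiv> Cpair f (i1, i2) (j1, j2) \<inter> Cpair f (k1, k2) (l1, l2) \<inter> Cpair f (u1, u2) (w1, w2)"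
  shows "finite T \<and> card T \<le> 2 * tdeg f"
proof -
  define a1 a2 b1 b2 e1 e2 g1 g2 where "a1 = k1 - i1" "a2 = k2 - i2" "b1 = l1 - j1" "b2 = l2 - j2"
     "e1 = u1 - i1" "e2 = u2 - i2" "g1 = w1 - j1" "g2 = w2 - j2"
  note defs = a1_a2_b1_b2_e1_e2_g1_g2_def
  define C1 where "C1 = (a1\<^sup>2 + a2\<^sup>2 - (b1\<^sup>2 + b2\<^sup>2)) / 2"
  define C2 where "C2 = (e1\<^sup>2 + e2\<^sup>2 - (g1\<^sup>2 + g2\<^sup>2)) / 2"
  define dt where "dt = b1 * g2 - b2 * g1"
  have dt0: "dt \<noteq> 0" using det unfolding dt_def defs .
  have C10: "C1 \<noteq> 0" using c1 unfolding C1_def defs by simp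
  define R1 where "R1 = (\<lambda>x y. (x - i1) * a1 + (y - i2) * a2 - C1)"
  define R2 where "R2 = (\<lambda>x y. (x - i1) * e1 + (y - i2) * e2 - C2)"
  define X where "X = (\<lambda>x y. (R1 x y * g2 - R2 x y * b2) / dt)"
  define Y where "Y = (\<lambda>x y. (b1 * R2 x y - g1 * R1 x y) / dt)"
  define G where "G = (\<lambda>x y. (x - i1)\<^sup>2 + (y - i2)\<^sup>2 - (X x y)\<^sup>2 - (Y x y)\<^sup>2)"
  have sol: "x' - j1 = X x y \<and> y' - j2 = Y x y \<and> (x, y) \<in> zset f \<and> G x y = 0"
    if "((x, y), (x', y')) \<in> T" for x y x' y'
  proof -
    have h1: "(x - i1)\<^sup>2 + (y - i2)\<^sup>2 = (x' - j1)\<^sup>2 + (y' - j2)\<^sup>2"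
      and h2: "(x - k1)\<^sup>2 + (y - k2)\<^sup>2 = (x' - l1)\<^sup>2 + (y' - l2)\<^sup>2"
      and h3: "(x - u1)\<^sup>2 + (y - u2)\<^sup>2 = (x' - w1)\<^sup>2 + (y' - w2)\<^sup>2"
      and "(x, y) \<in> zset f"
      using that unfolding T_def Cpair_def zset_def by auto
    have "(x' - j1) * b1 + (y' - j2) * b2 = R1 x y" "(x' - j1) * g1 + (y' - j2) * g2 = R2 x y"
      using equal_distances_linear[OF h1 h2] equal_distances_linear[OF h1 h3]
      unfolding R1_def R2_def C1_def C2_def defs by linarith+
    from cramer_2x2[OF this] have "x' - j1 = X x y" "y' - j2 = Y x y"
      unfolding X_def Y_def dt_def[symmetric] using dt0 by (simp_all add: eq_divide_eq)
    then show ?thesis using h1 \<open>(x, y) \<in> zset f\<close> unfolding G_def by simp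
  qed
  have R: "bipoly_fun 1 R1" "bipoly_fun 1 R2"
    unfolding R1_def R2_def
    by (intro bipoly_fun_add bipoly_fun_diff bipoly_fun_scale bipoly_fun_scale_right
        bipoly_fun_coordinates bipoly_fun_const)+
  have XY: "bipoly_fun 1 X" "bipoly_fun 1 Y"
    unfolding X_def Y_def
    by (intro bipoly_fun_divide bipoly_fun_diff bipoly_fun_scale bipoly_fun_scale_right R)+
  have "bipoly_fun 2 G"
    unfolding G_def
    by (intro bipoly_fun_diff bipoly_fun_add bipoly_fun_square bipoly_fun_coordinates bipoly_fun_const XY)
  moreover have "G i1 i2 \<noteq> 0"
  proof
    assume "G i1 i2 = 0"
    moreover have "G i1 i2 = - ((X i1 i2)\<^sup>2 + (Y i1 i2)\<^sup>2)" unfolding G_def by simp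
    ultimately have "(X i1 i2)\<^sup>2 + (Y i1 i2)\<^sup>2 = 0" by linarith
    then have "X i1 i2 = 0" "Y i1 i2 = 0" using sum_power2_eq_zero_iff by blast+
    moreover have "X i1 i2 * dt = - C1 * g2 + C2 * b2" "Y i1 i2 * dt = - b1 * C2 + g1 * C1"
      unfolding X_def Y_def R1_def R2_def using dt0 by simp_all
    then have "(X i1 i2 * b1 + Y i1 i2 * b2) * dt = - C1 * dt" unfolding dt_def by algebra
    ultimately show False using C10 dt0 by simp
  qed
  ultimately have finZ: "finite {(x, y) \<in> zset f. G x y = 0}"
    and cardZ: "card {(x, y) \<in> zset f. G x y = 0} \<le> 2 * tdeg f"
    using card_beyond_conic_zeros_quadratic[OF f] by blast+
  have sub: "fst ` T \<subseteq> {(x, y) \<in> zset f. G x y = 0}" using sol by force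
  have inj: "inj_on fst T"
  proof (rule inj_onI)
    fix s t assume st: "s \<in> T" "t \<in> T" "fst s = fst t"
    obtain x y x' y' where s: "s = ((x, y), (x', y'))" by (metis prod.collapse)
    obtain x2 y2 x2' y2' where t: "t = ((x2, y2), (x2', y2'))" by (metis prod.collapse)
    show "s = t" using st sol[of x y x' y'] sol[of x y x2' y2'] unfolding s t by auto
  qed
  have "finite T" using finite_imageD[OF finite_subset[OF sub finZ] inj] .
  moreover have "card T \<le> 2 * tdeg f"
    using card_image[OF inj] card_mono[OF finZ sub] cardZ by simp
  ultimately show ?thesis by simp
qed

text \<open>If both parts are singular, kernel vectors of the two \<open>2 \<times> 2\<close> systems combine the linear
  equations into one in \<open>(x, y)\<close> alone and one in \<open>(x', y')\<close> alone.\<close>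

lemma card_triple_Int_degenerate:
  fixes f :: bipoly and i1 i2 j1 j2 k1 k2 l1 l2 u1 u2 w1 w2 :: real
  assumes f: "beyond_conic f"
    and detb: "(l1 - j1) * (w2 - j2) - (l2 - j2) * (w1 - j1) = 0"
    and deta: "(k1 - i1) * (u2 - i2) - (k2 - i2) * (u1 - i1) = 0"
    and c1: "(k1 - i1)\<^sup>2 + (k2 - i2)\<^sup>2 \<noteq> (l1 - j1)\<^sup>2 + (l2 - j2)\<^sup>2"
    and c2: "(u1 - i1)\<^sup>2 + (u2 - i2)\<^sup>2 \<noteq> (w1 - j1)\<^sup>2 + (w2 - j2)\<^sup>2"
    and c3: "(k1 - u1)\<^sup>2 + (k2 - u2)\<^sup>2 \<noteq> (l1 - w1)\<^sup>2 + (l2 - w2)\<^sup>2"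
  defines "T \<equiv> Cpair f (i1, i2) (j1, j2) \<inter> Cpair f (k1, k2) (l1, l2) \<inter> Cpair f (u1, u2) (w1, w2)"
  shows "finite T \<and> card T \<le> 2 * tdeg f"
proof -
  define a1 a2 b1 b2 e1 e2 g1 g2 where "a1 = k1 - i1" "a2 = k2 - i2" "b1 = l1 - j1" "b2 = l2 - j2"
     "e1 = u1 - i1" "e2 = u2 - i2" "g1 = w1 - j1" "g2 = w2 - j2"
  note defs = a1_a2_b1_b2_e1_e2_g1_g2_def
  define C1 where "C1 = (a1\<^sup>2 + a2\<^sup>2 - (b1\<^sup>2 + b2\<^sup>2)) / 2"
  define C2 where "C2 = (e1\<^sup>2 + e2\<^sup>2 - (g1\<^sup>2 + g2\<^sup>2)) / 2"
  have c1': "a1\<^sup>2 + a2\<^sup>2 \<noteq> b1\<^sup>2 + b2\<^sup>2" and c2': "e1\<^sup>2 + e2\<^sup>2 \<noteq> g1\<^sup>2 + g2\<^sup>2"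
    using c1 c2 unfolding defs by auto
  have "a1 - e1 = k1 - u1" "a2 - e2 = k2 - u2" "b1 - g1 = l1 - w1" "b2 - g2 = l2 - w2"
    unfolding defs by simp_all
  then have c3': "(a1 - e1)\<^sup>2 + (a2 - e2)\<^sup>2 \<noteq> (b1 - g1)\<^sup>2 + (b2 - g2)\<^sup>2" using c3 by simp
  obtain m1 m2 where m: "(m1, m2) \<noteq> (0, 0)" "m1 * b1 + m2 * g1 = 0" "m1 * b2 + m2 * g2 = 0"
    using singular_2x2_kernel[of b1 g2 b2 g1] detb unfolding defs by auto
  obtain v1 v2 where v: "(v1, v2) \<noteq> (0, 0)" "v1 * a1 + v2 * e1 = 0" "v1 * a2 + v2 * e2 = 0"
    using singular_2x2_kernel[of a1 e2 a2 e1] deta unfolding defs by auto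
  define n1 n2 r where "n1 = m1 * a1 + m2 * e1" "n2 = m1 * a2 + m2 * e2" "r = m1 * C1 + m2 * C2"
  define n1' n2' r' where "n1' = v1 * b1 + v2 * g1" "n2' = v1 * b2 + v2 * g2"
    "r' = - (v1 * C1 + v2 * C2)"
  have lin: "(x - i1) * n1 + (y - i2) * n2 = r \<and> (x' - j1) * n1' + (y' - j2) * n2' = r' \<and>
      (x, y) \<in> zset f \<and> (x' - j1)\<^sup>2 + (y' - j2)\<^sup>2 = (x - i1)\<^sup>2 + (y - i2)\<^sup>2"
    if "((x, y), (x', y')) \<in> T" for x y x' y'
  proof -
    have h1: "(x - i1)\<^sup>2 + (y - i2)\<^sup>2 = (x' - j1)\<^sup>2 + (y' - j2)\<^sup>2"
      and h2: "(x - k1)\<^sup>2 + (y - k2)\<^sup>2 = (x' - l1)\<^sup>2 + (y' - l2)\<^sup>2"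
      and h3: "(x - u1)\<^sup>2 + (y - u2)\<^sup>2 = (x' - w1)\<^sup>2 + (y' - w2)\<^sup>2"
      and "(x, y) \<in> zset f"
      using that unfolding T_def Cpair_def zset_def by auto
    have L1: "(x - i1) * a1 + (y - i2) * a2 - ((x' - j1) * b1 + (y' - j2) * b2) = C1"
      using equal_distances_linear[OF h1 h2] unfolding C1_def defs .
    have L2: "(x - i1) * e1 + (y - i2) * e2 - ((x' - j1) * g1 + (y' - j2) * g2) = C2"
      using equal_distances_linear[OF h1 h3] unfolding C2_def defs .
    have "(x - i1) * n1 + (y - i2) * n2 =
       m1 * ((x - i1) * a1 + (y - i2) * a2 - ((x' - j1) * b1 + (y' - j2) * b2)) +
       m2 * ((x - i1) * e1 + (y - i2) * e2 - ((x' - j1) * g1 + (y' - j2) * g2)) +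
       (x' - j1) * (m1 * b1 + m2 * g1) + (y' - j2) * (m1 * b2 + m2 * g2)"
      unfolding n1_n2_r_def by (simp add: algebra_simps)
    then have "(x - i1) * n1 + (y - i2) * n2 = r" using L1 L2 m(2,3) unfolding n1_n2_r_def by simp
    moreover have "(x' - j1) * n1' + (y' - j2) * n2' =
       - (v1 * ((x - i1) * a1 + (y - i2) * a2 - ((x' - j1) * b1 + (y' - j2) * b2)) +
       v2 * ((x - i1) * e1 + (y - i2) * e2 - ((x' - j1) * g1 + (y' - j2) * g2))) +
       (x - i1) * (v1 * a1 + v2 * e1) + (y - i2) * (v1 * a2 + v2 * e2)"
      unfolding n1'_n2'_r'_def by (simp add: algebra_simps)
    then have "(x' - j1) * n1' + (y' - j2) * n2' = r'"
      using L1 L2 v(2,3) unfolding n1'_n2'_r'_def by simp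
    ultimately show ?thesis using \<open>(x, y) \<in> zset f\<close> h1 by simp
  qed
  show ?thesis
  proof (cases "T = {}")
    case False
    then obtain x y x' y' where "((x, y), (x', y')) \<in> T" by (metis prod.collapse ex_in_conv)
    note lin0 = lin[OF this]
    have n0: "(n1, n2) \<noteq> (0, 0)"
    proof
      assume "(n1, n2) = (0, 0)"
      then have z: "n1 = 0" "n2 = 0" "r = 0" using lin0 by auto
      then have "m1 * (a1\<^sup>2 + a2\<^sup>2 - (b1\<^sup>2 + b2\<^sup>2)) + m2 * (e1\<^sup>2 + e2\<^sup>2 - (g1\<^sup>2 + g2\<^sup>2)) = 0"
        unfolding n1_n2_r_def C1_def C2_def by simp
      from no_degenerate_combination[OF m(1) m(2,3) _ _ this c1' c2' c3'] z show False
        unfolding n1_n2_r_def by simp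
    qed
    have n0': "(n1', n2') \<noteq> (0, 0)"
    proof
      assume "(n1', n2') = (0, 0)"
      then have z: "n1' = 0" "n2' = 0" "r' = 0" using lin0 by auto
      then have "v1 * (a1\<^sup>2 + a2\<^sup>2 - (b1\<^sup>2 + b2\<^sup>2)) + v2 * (e1\<^sup>2 + e2\<^sup>2 - (g1\<^sup>2 + g2\<^sup>2)) = 0"
        unfolding n1'_n2'_r'_def C1_def C2_def by simp
      from no_degenerate_combination[OF v(1) _ _ v(2,3) this c1' c2' c3'] z show False
        unfolding n1'_n2'_r'_def by simp
    qed
    define A where "A = zset f \<inter> line_set n1 n2 (- (n1 * i1 + n2 * i2) - r)"
    define B where "B = (\<lambda>q. {p \<in> line_set n1' n2' (- (n1' * j1 + n2' * j2) - r').
      (fst p - j1)\<^sup>2 + (snd p - j2)\<^sup>2 = (fst q - i1)\<^sup>2 + (snd q - i2)\<^sup>2})"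
    have finA: "finite A" and cardA: "card A \<le> tdeg f"
      unfolding A_def using beyond_conic_Int_line_finite[OF f n0] card_beyond_conic_Int_line[OF f n0]
      by auto
    have finB: "finite (B q)" and cardB: "card (B q) \<le> 2" for q
      unfolding B_def using card_line_Int_circle[OF n0'] by auto
    have sub: "T \<subseteq> Sigma A B"
    proof
      fix t assume t: "t \<in> T"
      obtain x y x' y' where tx: "t = ((x, y), (x', y'))" by (metis prod.collapse)
      note lt = lin[OF t[unfolded tx]]
      have "(x, y) \<in> A" unfolding A_def line_set_def using lt by (auto simp: algebra_simps)
      moreover have "(x', y') \<in> B (x, y)"
        unfolding B_def line_set_def using lt by (auto simp: algebra_simps)
      ultimately show "t \<in> Sigma A B" using tx by auto
    qed
    have finS: "finite (Sigma A B)" using finA finB by simp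
    have "card T \<le> card (Sigma A B)" by (rule card_mono[OF finS sub])
    also have "\<dots> = (\<Sum>q\<in>A. card (B q))" by (rule card_SigmaI[OF finA]) (use finB in auto)
    also have "\<dots> \<le> card A * 2" using sum_bounded_above[of A "\<lambda>q. card (B q)" 2] cardB by simp
    also have "\<dots> \<le> 2 * tdeg f" using cardA by simp
    finally show ?thesis using finite_subset[OF sub finS] by simp
  qed simp
qed

lemma card_triple_Int:
  fixes f :: bipoly and i1 i2 j1 j2 k1 k2 l1 l2 u1 u2 w1 w2 :: real
  assumes f: "beyond_conic f"
    and c1: "(k1 - i1)\<^sup>2 + (k2 - i2)\<^sup>2 \<noteq> (l1 - j1)\<^sup>2 + (l2 - j2)\<^sup>2"
    and c2: "(u1 - i1)\<^sup>2 + (u2 - i2)\<^sup>2 \<noteq> (w1 - j1)\<^sup>2 + (w2 - j2)\<^sup>2"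
    and c3: "(k1 - u1)\<^sup>2 + (k2 - u2)\<^sup>2 \<noteq> (l1 - w1)\<^sup>2 + (l2 - w2)\<^sup>2"
  defines "T \<equiv> Cpair f (i1, i2) (j1, j2) \<inter> Cpair f (k1, k2) (l1, l2) \<inter> Cpair f (u1, u2) (w1, w2)"
  shows "finite T \<and> card T \<le> 2 * tdeg f"
proof (cases "(l1 - j1) * (w2 - j2) - (l2 - j2) * (w1 - j1) = 0")
  case False
  then show ?thesis unfolding T_def by (rule card_triple_Int_regular[OF f _ c1])
next
  case degenerate: True
  show ?thesis
  proof (cases "(k1 - i1) * (u2 - i2) - (k2 - i2) * (u1 - i1) = 0")
    case True
    then show ?thesis
      unfolding T_def using card_triple_Int_degenerate[OF f degenerate _ c1 c2 c3] by blast
  next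
    case False
    let ?T' = "Cpair f (j1, j2) (i1, i2) \<inter> Cpair f (l1, l2) (k1, k2) \<inter> Cpair f (w1, w2) (u1, u2)"
    have "finite ?T' \<and> card ?T' \<le> 2 * tdeg f"
      using c1 by (intro card_triple_Int_regular[OF f False]) simp
    moreover have "T = prod.swap ` ?T'"
      unfolding T_def by (subst (1 2 3) Cpair_swap) (simp add: image_Int swap_inj_on)
    ultimately show ?thesis by (simp add: card_image swap_inj_on)
  qed
qed

theorem lemma4p2:
  fixes d :: nat and C1 C2 :: "(real \<times> real) set" and f1 f2 :: bipoly
    and S1 S2 :: "(real \<times> real) set"
    and pi pj pk pl pu pw :: "real \<times> real"
  assumes "d \<ge> 1"
    and "irreducible_curve C1" and "irreducible_curve C2"
    and "curve_degree C1 \<le> d" and "curve_degree C2 \<le> d"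
    and "f1 \<noteq> 0" and "C1 = zset f1" and "tdeg f1 = curve_degree C1"
    and "f2 \<noteq> 0" and "C2 = zset f2" and "tdeg f2 = curve_degree C2"
    and "finite S1" and "S1 \<subseteq> C1" and "finite S2" and "S2 \<subseteq> C2"
    and "\<not> is_vertical_line C1" and "\<not> is_vertical_line C2"
    and "S1 \<inter> S2 = {}"
    and "circle_cond C1 S2" and "circle_cond C2 S1"
    and "line_cond C1 S2" and "line_cond C2 S1"
    and "pi \<in> S1" and "pj \<in> S1" and "pk \<in> S1" and "pl \<in> S1" and "pu \<in> S1" and "pw \<in> S1"
    and "dist pi pk \<noteq> dist pj pl" and "dist pi pu \<noteq> dist pj pw" and "dist pk pu \<noteq> dist pl pw"
    and "\<not> is_conic C2" and "\<not> is_line C2"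
  shows "finite (Cpair f2 pi pj \<inter> Cpair f2 pk pl \<inter> Cpair f2 pu pw) \<and>
         card (Cpair f2 pi pj \<inter> Cpair f2 pk pl \<inter> Cpair f2 pu pw) \<le> 2 * d"
proof -
  have "irreducible f2" using irreducible_if_minimal_degree assms(3,9,10,11) by blast
  moreover have "infinite C2" using assms(3) unfolding irreducible_curve_def plane_curve_def by blast
  ultimately have f2: "beyond_conic f2" unfolding beyond_conic_def using assms(10,11,32,33) by simp
  obtain i1 i2 j1 j2 k1 k2 l1 l2 u1 u2 w1 w2 where
    "pi = (i1, i2)" "pj = (j1, j2)" "pk = (k1, k2)" "pl = (l1, l2)" "pu = (u1, u2)" "pw = (w1, w2)"
    by (metis prod.collapse)
  moreover note dist_neq_imp_sq_neq[of i1 i2 k1 k2 j1 j2 l1 l2] dist_neq_imp_sq_neq[of i1 i2 u1 u2 j1 j2 w1 w2]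
    dist_neq_imp_sq_neq[of u1 u2 k1 k2 w1 w2 l1 l2]
  ultimately have "finite (Cpair f2 pi pj \<inter> Cpair f2 pk pl \<inter> Cpair f2 pu pw) \<and>
      card (Cpair f2 pi pj \<inter> Cpair f2 pk pl \<inter> Cpair f2 pu pw) \<le> 2 * tdeg f2"
    using card_triple_Int[OF f2] assms(29-31) by (simp add: dist_commute)
  then show ?thesis using assms(5,11) by simp
qed

end
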